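(* Let $Z$ be a hyperimmune set. Then there is a $1$-generic set $G\leq_T Z\oplus 0'$ such that $Z\subseteq G$.
   Context: An infinite set $Z$ is hyperimmune if for every computable increasing function $f$ there is an $n$ such that $[f(n),f(n+1))\cap Z=\emptyset$. A set $G$ (identified with its characteristic sequence in $2^\omega$) is $1$-generic if for every c.e. set $S$ of finite binary strings, either some initial segment of $G$ lies in $S$, or some initial segment of $G$ has no extension in $S$. *)

theory Defs
  imports Main "HOL-Library.Nat_Bijection"
begin

datatype rf = Zero | Succ | Proj nat | Comp rf "rf list" | PrimRec rf rf | Mu rf | Query

definition arg0 :: "nat list \<Rightarrow> nat" where
  "arg0 xs = (if xs = [] then 0 else hd xs)"

inductive eval :: "nat set \<Rightarrow> rf \<Rightarrow> nat list \<Rightarrow> nat \<Rightarrow> bool" for A :: "nat set" where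
  zero: "eval A Zero xs 0"
| succ: "eval A Succ xs (Suc (arg0 xs))"
| proj: "eval A (Proj i) xs (if i < length xs then xs ! i else 0)"
| query: "eval A Query xs (if arg0 xs \<in> A then 1 else 0)"
| comp: "list_all2 (\<lambda>g y. eval A g xs y) gs ys \<Longrightarrow> eval A f ys z \<Longrightarrow> eval A (Comp f gs) xs z"
| prec0: "eval A f xs y \<Longrightarrow> eval A (PrimRec f g) (0 # xs) y"
| precS: "eval A (PrimRec f g) (n # xs) r \<Longrightarrow> eval A g (n # r # xs) y
           \<Longrightarrow> eval A (PrimRec f g) (Suc n # xs) y"
| mu: "eval A f (n # xs) 0 \<Longrightarrow> (\<forall>m<n. \<exists>y. y \<noteq> 0 \<and> eval A f (m # xs) y)
           \<Longrightarrow> eval A (Mu f) xs n"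

definition computable_in :: "nat set \<Rightarrow> (nat \<Rightarrow> nat) \<Rightarrow> bool" where
  "computable_in A f \<longleftrightarrow> (\<exists>p. \<forall>n. eval A p [n] (f n))"

definition computable :: "(nat \<Rightarrow> nat) \<Rightarrow> bool" where
  "computable f \<longleftrightarrow> computable_in {} f"

definition turing_le :: "nat set \<Rightarrow> nat set \<Rightarrow> bool" where
  "turing_le X A \<longleftrightarrow> (\<exists>p. \<forall>n. eval A p [n] (if n \<in> X then 1 else 0))"

fun rf_num :: "rf \<Rightarrow> nat" where
  "rf_num Zero = prod_encode (0, 0)"
| "rf_num Succ = prod_encode (1, 0)"
| "rf_num (Proj i) = prod_encode (2, i)"
| "rf_num (Comp f gs) = prod_encode (3, prod_encode (rf_num f, list_encode (map rf_num gs)))"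
| "rf_num (PrimRec f g) = prod_encode (4, prod_encode (rf_num f, rf_num g))"
| "rf_num (Mu f) = prod_encode (5, rf_num f)"
| "rf_num Query = prod_encode (6, 0)"

definition halting_set :: "nat set" where
  "halting_set = {e. \<exists>p. rf_num p = e \<and> (\<exists>y. eval {} p [e] y)}"

definition join :: "nat set \<Rightarrow> nat set \<Rightarrow> nat set" where
  "join X Y = {2 * n | n. n \<in> X} \<union> {2 * n + 1 | n. n \<in> Y}"

definition hyperimmune :: "nat set \<Rightarrow> bool" where
  "hyperimmune Z \<longleftrightarrow> infinite Z \<and>
     (\<forall>f. computable f \<and> strict_mono f \<longrightarrow> (\<exists>n. {f n..<f (Suc n)} \<inter> Z = {}))"

definition str_code :: "bool list \<Rightarrow> nat" where
  "str_code \<sigma> = list_encode (map (\<lambda>b. if b then 1 else 0) \<sigma>)"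

definition ce_strings :: "bool list set \<Rightarrow> bool" where
  "ce_strings S \<longleftrightarrow> (\<exists>p. \<forall>\<sigma>. \<sigma> \<in> S \<longleftrightarrow> (\<exists>y. eval {} p [str_code \<sigma>] y))"

definition init_seg :: "nat set \<Rightarrow> nat \<Rightarrow> bool list" where
  "init_seg G n = map (\<lambda>i. i \<in> G) [0..<n]"

definition one_generic :: "nat set \<Rightarrow> bool" where
  "one_generic G \<longleftrightarrow> (\<forall>S. ce_strings S \<longrightarrow>
      (\<exists>n. init_seg G n \<in> S) \<or> (\<exists>n. \<forall>\<tau>\<in>S. \<not> (\<exists>\<rho>. \<tau> = init_seg G n @ \<rho>)))"

end

theory Submission
  imports Defs
begin

text \<open>
  \<open>G\<close> is built by finite extension, computably in \<open>Z \<oplus> 0'\<close>. At stage \<open>e\<close>, with current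
  binary string \<open>\<sigma>\<close>, ask \<open>0'\<close> whether program \<open>e\<close> (read as a clocked enumeration of a set of
  strings) accepts some binary extension of \<open>\<sigma>1\<^sup>k\<close>; if so, take the first such extension \<open>\<tau>\<^sub>k\<close>
  found by a \<open>\<mu>\<close>-search. The padding \<open>k\<close> is chosen least such that either the answer is no, or
  \<open>\<tau>\<^sub>k\<close> has a \<open>1\<close> at every element of \<open>Z\<close> below its length; the new string is \<open>\<tau>\<^sub>k\<close> (or \<open>\<sigma>1\<^sup>k\<close>),
  followed by one more \<open>1\<close>.
  A suitable \<open>k\<close> exists by hyperimmunity: otherwise \<open>k \<mapsto> |\<tau>\<^sub>k|\<close> is computable, and an interval
  \<open>[|\<sigma>| + k, |\<tau>\<^sub>k|)\<close> disjoint from \<open>Z\<close> makes \<open>\<tau>\<^sub>k\<close> cover \<open>Z\<close>.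
\<close>

inductive_cases evalZeroE: "eval A Zero xs y"
inductive_cases evalSuccE: "eval A Succ xs y"
inductive_cases evalProjE: "eval A (Proj i) xs y"
inductive_cases evalQueryE: "eval A Query xs y"
inductive_cases evalCompE: "eval A (Comp f gs) xs y"
inductive_cases evalPrecE: "eval A (PrimRec f g) xs y"
inductive_cases evalMuE: "eval A (Mu f) xs y"

lemma list_all2_unique:
  assumes "list_all2 (\<lambda>x y. \<forall>y'. P x y' \<longrightarrow> y = y') xs ys" "list_all2 P xs ys'"
  shows "ys = ys'"
  using assms by (auto simp: list_all2_conv_all_nth intro: nth_equalityI)

lemma eval_det: "eval A p xs y \<Longrightarrow> eval A p xs y' \<Longrightarrow> y = y'"
proof (induction arbitrary: y' rule: eval.induct)
  case (comp xs gs ys f z)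
  from comp.prems obtain ys' where ys': "list_all2 (\<lambda>g y. eval A g xs y) gs ys'" and f: "eval A f ys' y'"
    by (rule evalCompE) blast
  have "list_all2 (\<lambda>g y. \<forall>y'. eval A g xs y' \<longrightarrow> y = y') gs ys"
    using comp.IH(1) by (rule list_all2_mono) blast
  then have "ys = ys'" using ys' by (rule list_all2_unique)
  with comp.IH(2) f show ?case by simp
next
  case (prec0 f xs y g)
  from prec0.prems show ?case
    by (rule evalPrecE) (use prec0.IH in simp_all)
next
  case (precS f g n xs r y)
  from precS.prems obtain r' where "eval A (PrimRec f g) (n # xs) r'" "eval A g (n # r' # xs) y'"
    by (rule evalPrecE) auto
  with precS.IH show ?case by simp
next
  case (mu f n xs)
  from mu.prems have y': "eval A f (y' # xs) 0" and below: "\<forall>m<y'. \<exists>y. y \<noteq> 0 \<and> eval A f (m # xs) y"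
    by (auto elim: evalMuE)
  show ?case
  proof (rule linorder_cases[of n y'])
    assume "n < y'"
    with below mu.IH(1) show ?case by auto
  next
    assume "y' < n"
    with mu.IH(2) y' show ?case by fastforce
  qed
qed (auto elim: evalZeroE evalSuccE evalProjE evalQueryE)

lemma eval_Comp_iff:
  "eval A (Comp f gs) xs y \<longleftrightarrow> (\<exists>ys. list_all2 (\<lambda>g y. eval A g xs y) gs ys \<and> eval A f ys y)"
  by (auto elim: evalCompE intro: eval.comp)

lemma eval_Mu_iff:
  "eval A (Mu f) xs n \<longleftrightarrow> eval A f (n # xs) 0 \<and> (\<forall>m<n. \<exists>y. y \<noteq> 0 \<and> eval A f (m # xs) y)"
  by (auto elim: evalMuE intro: eval.mu)

lemma eval_Proj_iff:
  "eval A (Proj i) xs y \<longleftrightarrow> y = (if i < length xs then xs ! i else 0)"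
  using eval.proj[of A i xs] by (auto elim: evalProjE)

section \<open>Computable functions of fixed arity\<close>

definition comp_fn :: "nat set \<Rightarrow> nat \<Rightarrow> (nat list \<Rightarrow> nat) \<Rightarrow> bool" where
  "comp_fn A n F \<longleftrightarrow> (\<exists>p. \<forall>xs. length xs = n \<longrightarrow> eval A p xs (F xs))"

named_theorems comp_intros

lemma comp_fn_cong:
  "comp_fn A n F \<Longrightarrow> (\<And>xs. length xs = n \<Longrightarrow> F xs = G xs) \<Longrightarrow> comp_fn A n G"
  unfolding comp_fn_def by metis

fun const_prog :: "nat \<Rightarrow> rf" where
  "const_prog 0 = Zero"
| "const_prog (Suc c) = Comp Succ [const_prog c]"

lemma eval_const_prog: "eval A (const_prog c) xs c"
proof (induction c)
  case 0 then show ?case by (auto intro: eval.zero)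
next
  case (Suc c)
  have "eval A Succ [c] (Suc (arg0 [c]))" by (rule eval.succ)
  then have "eval A Succ [c] (Suc c)" by (simp add: arg0_def)
  with Suc show ?case by (auto intro!: eval.comp[where ys="[c]"])
qed

lemma eval_const_prog_iff: "eval A (const_prog c) xs y \<longleftrightarrow> y = c"
  using eval_const_prog eval_det by blast

lemma comp_fn_const[comp_intros]: "comp_fn A n (\<lambda>xs. c)"
  unfolding comp_fn_def using eval_const_prog by blast

lemma comp_fn_proj[comp_intros]: "i < n \<Longrightarrow> comp_fn A n (\<lambda>xs. xs ! i)"
  unfolding comp_fn_def using eval.proj[of A i] by metis

lemma programs_exist:
  assumes "\<forall>G\<in>set Gs. comp_fn A n G"
  shows "\<exists>ps. list_all2 (\<lambda>p G. \<forall>xs. length xs = n \<longrightarrow> eval A p xs (G xs)) ps Gs"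
  using assms
proof (induction Gs)
  case Nil then show ?case by auto
next
  case (Cons G Gs)
  then obtain ps where "list_all2 (\<lambda>p G. \<forall>xs. length xs = n \<longrightarrow> eval A p xs (G xs)) ps Gs" by auto
  moreover from Cons obtain p where "\<forall>xs. length xs = n \<longrightarrow> eval A p xs (G xs)" by (auto simp: comp_fn_def)
  ultimately show ?case by (auto intro!: exI[of _ "p # ps"])
qed

lemma comp_fn_compose:
  assumes "comp_fn A m F" "length Gs = m" "\<forall>G\<in>set Gs. comp_fn A n G"
  shows "comp_fn A n (\<lambda>xs. F (map (\<lambda>G. G xs) Gs))"
proof -
  obtain pf where pf: "\<forall>ys. length ys = m \<longrightarrow> eval A pf ys (F ys)" using assms(1) by (auto simp: comp_fn_def)
  obtain ps where ps: "list_all2 (\<lambda>p G. \<forall>xs. length xs = n \<longrightarrow> eval A p xs (G xs)) ps Gs"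
    using programs_exist[OF assms(3)] by auto
  show ?thesis unfolding comp_fn_def
  proof (intro exI allI impI)
    fix xs :: "nat list" assume l: "length xs = n"
    have "list_all2 (\<lambda>g y. eval A g xs y) ps (map (\<lambda>G. G xs) Gs)"
      using ps l by (auto simp: list_all2_map2 elim: list_all2_mono)
    moreover have "eval A pf (map (\<lambda>G. G xs) Gs) (F (map (\<lambda>G. G xs) Gs))"
      using pf assms(2) by auto
    ultimately show "eval A (Comp pf ps) xs (F (map (\<lambda>G. G xs) Gs))" by (rule eval.comp)
  qed
qed

lemma comp_fn_app1:
  "comp_fn A 1 (\<lambda>ys. F (ys ! 0)) \<Longrightarrow> comp_fn A n a \<Longrightarrow> comp_fn A n (\<lambda>xs. F (a xs))"
  using comp_fn_compose[of A 1 "\<lambda>ys. F (ys ! 0)" "[a]" n] by auto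

lemma comp_fn_app2:
  "comp_fn A 2 (\<lambda>ys. F (ys ! 0) (ys ! 1)) \<Longrightarrow> comp_fn A n a \<Longrightarrow> comp_fn A n b \<Longrightarrow>
    comp_fn A n (\<lambda>xs. F (a xs) (b xs))"
  using comp_fn_compose[of A 2 "\<lambda>ys. F (ys ! 0) (ys ! 1)" "[a, b]" n] by auto

lemma comp_fn_compose_Cons:
  assumes "comp_fn A (Suc m) F" "comp_fn A n a" "\<forall>G\<in>set Gs. comp_fn A n G" "length Gs = m"
  shows "comp_fn A n (\<lambda>xs. F (a xs # map (\<lambda>G. G xs) Gs))"
  using comp_fn_compose[of A "Suc m" F "a # Gs" n] assms by auto

lemma comp_fn_tl[comp_intros]:
  "comp_fn A n G \<Longrightarrow> comp_fn A (Suc n) (\<lambda>ws. G (tl ws))"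
proof -
  assume "comp_fn A n G"
  have "comp_fn A (Suc n) (\<lambda>ws. G (map (\<lambda>H. H ws) (map (\<lambda>i ws. ws ! Suc i) [0..<n])))"
    by (rule comp_fn_compose) (use \<open>comp_fn A n G\<close> in \<open>auto intro: comp_fn_proj\<close>)
  moreover have "map (\<lambda>i. xs ! Suc i) [0..<n] = tl xs" if "length xs = Suc n" for xs :: "nat list"
    by (rule nth_equalityI) (use that in \<open>auto simp: nth_tl\<close>)
  ultimately show ?thesis
    by (elim comp_fn_cong) (simp add: comp_def)
qed

lemma comp_fn_hd[comp_intros]: "comp_fn A (Suc n) (\<lambda>ws. hd ws)"
  by (rule comp_fn_cong[OF comp_fn_proj[of 0]]) (simp, case_tac xs, auto)

lemma comp_fn_Suc[comp_intros]:
  assumes "comp_fn A n a"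
  shows "comp_fn A n (\<lambda>xs. Suc (a xs))"
proof -
  have "comp_fn A 1 (\<lambda>ys. Suc (ys ! 0))"
    unfolding comp_fn_def
    using eval.succ[of A] by (metis arg0_def hd_conv_nth length_0_conv zero_neq_one)
  from this assms show ?thesis by (rule comp_fn_app1)
qed

lemma comp_fn_PrimRec:
  assumes "comp_fn A n f" "comp_fn A (Suc (Suc n)) g"
  shows "comp_fn A (Suc n) (\<lambda>xs. rec_nat (f (tl xs)) (\<lambda>k r. g (k # r # tl xs)) (hd xs))"
proof -
  obtain pf where pf: "\<forall>ys. length ys = n \<longrightarrow> eval A pf ys (f ys)" using assms(1) by (auto simp: comp_fn_def)
  obtain pg where pg: "\<forall>ys. length ys = Suc (Suc n) \<longrightarrow> eval A pg ys (g ys)"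
    using assms(2) by (auto simp: comp_fn_def)
  have main: "eval A (PrimRec pf pg) (k # ys) (rec_nat (f ys) (\<lambda>k r. g (k # r # ys)) k)"
    if "length ys = n" for k ys
  proof (induction k)
    case 0 then show ?case using pf that by (auto intro: eval.prec0)
  next
    case (Suc k) then show ?case using pg that by (auto intro: eval.precS)
  qed
  show ?thesis unfolding comp_fn_def
  proof (intro exI allI impI)
    fix xs :: "nat list" assume "length xs = Suc n"
    then obtain k ys where "xs = k # ys" "length ys = n" by (cases xs) auto
    then show "eval A (PrimRec pf pg) xs (rec_nat (f (tl xs)) (\<lambda>k r. g (k # r # tl xs)) (hd xs))"
      using main by auto
  qed
qed

lemma map_nth_eq: "length xs = n \<Longrightarrow> map (\<lambda>i. xs ! i) [0..<n] = xs"
  using map_nth[of xs] by simp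

lemma comp_fn_rec_nat[comp_intros]:
  assumes "comp_fn A n z" "comp_fn A n a" "comp_fn A (Suc (Suc n)) (\<lambda>ws. s (ws ! 0) (ws ! 1) (tl (tl ws)))"
  shows "comp_fn A n (\<lambda>xs. rec_nat (z xs) (\<lambda>k r. s k r xs) (a xs))"
proof -
  have 1: "comp_fn A (Suc n) (\<lambda>xs. rec_nat (z (tl xs)) (\<lambda>k r. s k r (tl xs)) (hd xs))"
    using comp_fn_PrimRec[OF assms(1) assms(3)] by simp
  have "comp_fn A n (\<lambda>xs. (\<lambda>ys. rec_nat (z (tl ys)) (\<lambda>k r. s k r (tl ys)) (hd ys))
      (a xs # map (\<lambda>G. G xs) (map (\<lambda>i xs. xs ! i) [0..<n])))"
    by (rule comp_fn_compose_Cons[OF 1 assms(2)]) (auto intro: comp_fn_proj)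
  then show ?thesis
    by (rule comp_fn_cong) (simp add: comp_def map_nth_eq)
qed

lemma comp_fn_Least_zero:
  assumes "comp_fn A (Suc n) f" "\<And>xs. length xs = n \<Longrightarrow> \<exists>m. f (m # xs) = 0"
  shows "comp_fn A n (\<lambda>xs. LEAST m. f (m # xs) = 0)"
proof -
  obtain pf where pf: "\<forall>ys. length ys = Suc n \<longrightarrow> eval A pf ys (f ys)"
    using assms(1) by (auto simp: comp_fn_def)
  show ?thesis unfolding comp_fn_def
  proof (intro exI allI impI)
    fix xs :: "nat list" assume l: "length xs = n"
    let ?m = "LEAST m. f (m # xs) = 0"
    have "f (?m # xs) = 0" using assms(2)[OF l] by (rule LeastI_ex)
    then have 1: "eval A pf (?m # xs) 0" using pf l by (metis length_Cons)
    have "\<forall>m<?m. f (m # xs) \<noteq> 0" using not_less_Least by blast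
    then have 2: "\<forall>m<?m. \<exists>y. y \<noteq> 0 \<and> eval A pf (m # xs) y" using pf l by (metis length_Cons)
    show "eval A (Mu pf) xs ?m" using 1 2 by (rule eval.mu)
  qed
qed

lemma computable_in_iff_comp_fn:
  "computable_in A f \<longleftrightarrow> comp_fn A 1 (\<lambda>xs. f (xs ! 0))"
  unfolding computable_in_def comp_fn_def
  by (metis (no_types, lifting) length_Cons list.size(3) nth_Cons_0 One_nat_def
      length_0_conv length_Suc_conv)

section \<open>Arithmetic, predicates and bounded search\<close>

lemma rec_nat_add: "rec_nat b (\<lambda>k r. Suc r) a = a + b" by (induction a) auto

lemma rec_nat_mult: "rec_nat 0 (\<lambda>k r. r + b) a = a * b" by (induction a) auto

lemma rec_nat_pred: "rec_nat 0 (\<lambda>k r. k) a = a - 1" by (induction a) auto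

lemma rec_nat_diff: "rec_nat a (\<lambda>k r. r - Suc 0) b = a - b" by (induction b) auto

lemma comp_fn_add[comp_intros]:
  assumes "comp_fn A n a" and "comp_fn A n b"
  shows "comp_fn A n (\<lambda>xs. a xs + b xs)"
proof -
  have "comp_fn A 2 (\<lambda>ys. rec_nat (ys ! 1) (\<lambda>k r. Suc r) (ys ! 0))"
    by (intro comp_intros) auto
  then have "comp_fn A 2 (\<lambda>ys. ys ! 0 + ys ! 1)" by (simp add: rec_nat_add)
  from this assms show ?thesis by (rule comp_fn_app2)
qed

lemma comp_fn_pred[comp_intros]:
  assumes "comp_fn A n a"
  shows "comp_fn A n (\<lambda>xs. a xs - 1)"
proof -
  have "comp_fn A 1 (\<lambda>ys. rec_nat 0 (\<lambda>k r. k) (ys ! 0))"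
    by (intro comp_intros) auto
  then have "comp_fn A 1 (\<lambda>ys. ys ! 0 - 1)" by (simp add: rec_nat_pred)
  from this assms show ?thesis by (rule comp_fn_app1)
qed

lemma comp_fn_diff[comp_intros]:
  assumes "comp_fn A n a" and "comp_fn A n b"
  shows "comp_fn A n (\<lambda>xs. a xs - b xs)"
proof -
  have "comp_fn A 2 (\<lambda>ys. rec_nat (ys ! 0) (\<lambda>k r. r - 1) (ys ! 1))"
    by (intro comp_intros) auto
  then have "comp_fn A 2 (\<lambda>ys. ys ! 0 - ys ! 1)" by (simp add: rec_nat_diff)
  from this assms show ?thesis by (rule comp_fn_app2)
qed

lemma comp_fn_mult[comp_intros]:
  assumes "comp_fn A n a" and "comp_fn A n b"
  shows "comp_fn A n (\<lambda>xs. a xs * b xs)"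
proof -
  have "comp_fn A 2 (\<lambda>ys. rec_nat 0 (\<lambda>k r. r + ys ! 1) (ys ! 0))"
    by (intro comp_intros) auto
  then have "comp_fn A 2 (\<lambda>ys. ys ! 0 * ys ! 1)" by (simp add: rec_nat_mult)
  from this assms show ?thesis by (rule comp_fn_app2)
qed

definition comp_pred :: "nat set \<Rightarrow> nat \<Rightarrow> (nat list \<Rightarrow> bool) \<Rightarrow> bool" where
  "comp_pred A n P \<longleftrightarrow> comp_fn A n (\<lambda>xs. if P xs then 1 else 0)"

lemma comp_fn_tl_tl_nth[comp_intros]:
  "i < n \<Longrightarrow> comp_fn A (Suc (Suc n)) (\<lambda>ws. tl (tl ws) ! i)"
  by (rule comp_fn_cong[OF comp_fn_proj[of "Suc (Suc i)"]]) (auto simp: nth_tl)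

lemma comp_pred_const[comp_intros]: "comp_pred A n (\<lambda>xs. b)"
  unfolding comp_pred_def by (rule comp_fn_const)

lemma comp_pred_eq[comp_intros]:
  "comp_fn A n a \<Longrightarrow> comp_fn A n b \<Longrightarrow> comp_pred A n (\<lambda>xs. a xs = b xs)"
  unfolding comp_pred_def
  by (rule comp_fn_cong[where F="\<lambda>xs. 1 - ((a xs - b xs) + (b xs - a xs))"],
      (intro comp_intros; assumption), auto)

lemma comp_pred_le[comp_intros]:
  "comp_fn A n a \<Longrightarrow> comp_fn A n b \<Longrightarrow> comp_pred A n (\<lambda>xs. a xs \<le> b xs)"
  unfolding comp_pred_def
  by (rule comp_fn_cong[where F="\<lambda>xs. 1 - (a xs - b xs)"], (intro comp_intros; assumption), auto)

lemma comp_pred_less[comp_intros]: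
  "comp_fn A n a \<Longrightarrow> comp_fn A n b \<Longrightarrow> comp_pred A n (\<lambda>xs. a xs < b xs)"
  unfolding comp_pred_def
  by (rule comp_fn_cong[where F="\<lambda>xs. 1 - (Suc (a xs) - b xs)"], (intro comp_intros; assumption), auto)

lemma comp_pred_not[comp_intros]:
  "comp_pred A n P \<Longrightarrow> comp_pred A n (\<lambda>xs. \<not> P xs)"
  unfolding comp_pred_def
  by (rule comp_fn_cong[where F="\<lambda>xs. 1 - (if P xs then 1 else 0)"], (intro comp_intros; assumption), auto)

lemma comp_pred_conj[comp_intros]:
  "comp_pred A n P \<Longrightarrow> comp_pred A n Q \<Longrightarrow> comp_pred A n (\<lambda>xs. P xs \<and> Q xs)"
  unfolding comp_pred_def
  by (rule comp_fn_cong[where F="\<lambda>xs. (if P xs then 1 else 0) * (if Q xs then 1 else 0)"],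
      (intro comp_intros; assumption), auto)

lemma comp_pred_disj[comp_intros]:
  "comp_pred A n P \<Longrightarrow> comp_pred A n Q \<Longrightarrow> comp_pred A n (\<lambda>xs. P xs \<or> Q xs)"
proof -
  assume "comp_pred A n P" "comp_pred A n Q"
  then have "comp_pred A n (\<lambda>xs. \<not> (\<not> P xs \<and> \<not> Q xs))" by (intro comp_intros)
  then show ?thesis by simp
qed

lemma comp_pred_imp[comp_intros]:
  "comp_pred A n P \<Longrightarrow> comp_pred A n Q \<Longrightarrow> comp_pred A n (\<lambda>xs. P xs \<longrightarrow> Q xs)"
proof -
  assume "comp_pred A n P" "comp_pred A n Q"
  then have "comp_pred A n (\<lambda>xs. \<not> P xs \<or> Q xs)" by (intro comp_intros)
  then show ?thesis by simp
qed

lemma comp_fn_if[comp_intros]: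
  "comp_pred A n P \<Longrightarrow> comp_fn A n a \<Longrightarrow> comp_fn A n b \<Longrightarrow>
    comp_fn A n (\<lambda>xs. if P xs then a xs else b xs)"
  unfolding comp_pred_def
  by (rule comp_fn_cong[where
        F="\<lambda>xs. (if P xs then 1 else 0) * a xs + (1 - (if P xs then 1 else 0)) * b xs"],
      (intro comp_intros; assumption), auto)

lemma comp_fn_max[comp_intros]:
  "comp_fn A n a \<Longrightarrow> comp_fn A n b \<Longrightarrow> comp_fn A n (\<lambda>xs. max (a xs) (b xs))"
  unfolding max_def by (intro comp_intros)

lemma comp_pred_oracle[comp_intros]:
  assumes "comp_fn A n a"
  shows "comp_pred A n (\<lambda>xs. a xs \<in> A)"
proof -
  have "comp_fn A 1 (\<lambda>ys. if ys ! 0 \<in> A then 1 else 0)"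
    unfolding comp_fn_def
    using eval.query[of A] by (metis arg0_def hd_conv_nth length_0_conv zero_neq_one)
  from this assms show ?thesis unfolding comp_pred_def by (rule comp_fn_app1)
qed

lemma turing_le_iff_comp_pred:
  "turing_le X A \<longleftrightarrow> comp_pred A 1 (\<lambda>xs. xs ! 0 \<in> X)"
  unfolding turing_le_def comp_pred_def comp_fn_def
  by (metis (no_types, lifting) length_Cons list.size(3) nth_Cons_0 One_nat_def
      length_0_conv length_Suc_conv)

lemma comp_fn_Least[comp_intros]:
  assumes "comp_pred A (Suc n) (\<lambda>ws. P (hd ws) (tl ws))" "\<And>xs. length xs = n \<Longrightarrow> \<exists>m. P m xs"
  shows "comp_fn A n (\<lambda>xs. LEAST m. P m xs)"
proof -
  have "comp_fn A (Suc n) (\<lambda>ws. if P (hd ws) (tl ws) then 0 else 1)"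
    by (intro comp_intros assms(1))
  then have "comp_fn A n (\<lambda>xs. LEAST m. (\<lambda>ws. if P (hd ws) (tl ws) then 0 else 1) (m # xs) = (0::nat))"
    by (rule comp_fn_Least_zero) (use assms(2) in auto)
  moreover have "(\<lambda>m. (if P m xs then 0 else 1) = (0::nat)) = (\<lambda>m. P m xs)" for xs by auto
  ultimately show ?thesis by simp
qed

lemma comp_pred_all_less[comp_intros]:
  assumes "comp_pred A (Suc n) (\<lambda>ws. P (hd ws) (tl ws))" "comp_fn A n b"
  shows "comp_pred A n (\<lambda>xs. \<forall>i<b xs. P i xs)"
proof -
  have e: "rec_nat (1::nat) (\<lambda>k r. r * (if P k xs then 1 else 0)) m = (if \<forall>i<m. P i xs then 1 else 0)"
    for m xs
    by (induction m) (auto simp: less_Suc_eq)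
  have 1: "comp_fn A (Suc n) (\<lambda>ws. if P (hd ws) (tl ws) then 1 else 0)"
    using assms(1) unfolding comp_pred_def .
  have 2: "comp_fn A (Suc (Suc n)) (\<lambda>ws. ws ! 1 * (if P (ws ! 0) (tl (tl ws)) then 1 else 0))"
  proof -
    have "comp_fn A (Suc (Suc n)) (\<lambda>ws. (\<lambda>zs. if P (hd zs) (tl zs) then 1 else 0)
        ((ws ! 0) # map (\<lambda>G. G ws) (map (\<lambda>i ws. tl (tl ws) ! i) [0..<n])))"
      by (rule comp_fn_compose_Cons[OF 1]) (auto intro!: comp_fn_proj comp_fn_tl_tl_nth)
    moreover have "map (\<lambda>i. tl (tl ws) ! i) [0..<n] = tl (tl ws)"
      if "length ws = Suc (Suc n)" for ws :: "nat list"
      using that by (intro map_nth_eq) simp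
    ultimately have "comp_fn A (Suc (Suc n)) (\<lambda>ws. if P (ws ! 0) (tl (tl ws)) then 1 else 0)"
      by (elim comp_fn_cong) (simp add: comp_def)
    then show ?thesis by (intro comp_intros) (auto simp: comp_pred_def)
  qed
  have "comp_fn A n (\<lambda>xs. rec_nat 1 (\<lambda>k r. r * (if P k xs then 1 else 0)) (b xs))"
    by (rule comp_fn_rec_nat) (use 2 assms(2) in \<open>auto intro: comp_fn_const\<close>)
  then show ?thesis unfolding comp_pred_def e .
qed

lemma comp_fn_funpow[comp_intros]:
  assumes "comp_fn A 1 (\<lambda>ys. f (ys ! 0))" "comp_fn A n a" "comp_fn A n b"
  shows "comp_fn A n (\<lambda>xs. (f ^^ a xs) (b xs))"
proof -
  have e: "rec_nat c (\<lambda>k r. f r) m = (f ^^ m) c" for m c by (induction m) auto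
  have "comp_fn A (Suc (Suc n)) (\<lambda>ws. f (ws ! 1))"
    by (rule comp_fn_app1[OF assms(1)]) (intro comp_intros; simp)
  then have "comp_fn A n (\<lambda>xs. rec_nat (b xs) (\<lambda>k r. f r) (a xs))"
    by (intro comp_fn_rec_nat assms(2,3))
  then show ?thesis by (simp add: e)
qed

section \<open>Pairing and list codes\<close>

lemma comp_fn_triangle[comp_intros]:
  "comp_fn A n a \<Longrightarrow> comp_fn A n (\<lambda>xs. triangle (a xs))"
proof -
  have e: "rec_nat 0 (\<lambda>k r. Suc (r + k)) m = triangle m" for m by (induction m) auto
  assume "comp_fn A n a"
  then have "comp_fn A n (\<lambda>xs. rec_nat 0 (\<lambda>k r. r + Suc k) (a xs))" by (intro comp_intros) auto
  then show ?thesis by (simp add: e)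
qed

lemma comp_fn_prod_encode[comp_intros]:
  "comp_fn A n a \<Longrightarrow> comp_fn A n b \<Longrightarrow> comp_fn A n (\<lambda>xs. prod_encode (a xs, b xs))"
proof -
  assume "comp_fn A n a" "comp_fn A n b"
  then have "comp_fn A n (\<lambda>xs. triangle (a xs + b xs) + a xs)" by (intro comp_intros)
  then show ?thesis by (simp add: prod_encode_def)
qed

lemma triangle_mono: "a \<le> b \<Longrightarrow> triangle a \<le> triangle b"
  by (induction b) (auto simp: le_Suc_eq)

definition prod_decode_sum :: "nat \<Rightarrow> nat" where "prod_decode_sum n = (LEAST k. n < triangle (Suc k))"

lemma prod_decode_sum_eq: "prod_decode n = (x, y) \<Longrightarrow> prod_decode_sum n = x + y"
proof -
  assume d: "prod_decode n = (x, y)"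
  have n: "n = triangle (x + y) + x" using prod_decode_inverse[of n] d by (simp add: prod_encode_def)
  show ?thesis unfolding prod_decode_sum_def
  proof (rule Least_equality)
    show "n < triangle (Suc (x + y))" using n by simp
  next
    fix k assume "n < triangle (Suc k)"
    show "x + y \<le> k"
    proof (rule ccontr)
      assume "\<not> x + y \<le> k"
      then have "triangle (Suc k) \<le> triangle (x + y)" by (intro triangle_mono) simp
      with \<open>n < triangle (Suc k)\<close> n show False by simp
    qed
  qed
qed

lemma fst_prod_decode_eq: "fst (prod_decode n) = n - triangle (prod_decode_sum n)"
proof -
  obtain x y where d: "prod_decode n = (x, y)" by (cases "prod_decode n")
  have "n = triangle (x + y) + x" using prod_decode_inverse[of n] d by (simp add: prod_encode_def)
  then show ?thesis using prod_decode_sum_eq[OF d] d by simp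
qed

lemma snd_prod_decode_eq: "snd (prod_decode n) = prod_decode_sum n - fst (prod_decode n)"
  by (cases "prod_decode n") (simp add: prod_decode_sum_eq)

lemma ex_less_triangle: "\<exists>k. m < triangle (Suc k)"
proof -
  have "m \<le> triangle m" by (induction m) auto
  then show ?thesis by (intro exI[of _ m]) simp
qed

lemma comp_fn_prod_decode_sum[comp_intros]:
  "comp_fn A n a \<Longrightarrow> comp_fn A n (\<lambda>xs. prod_decode_sum (a xs))"
proof -
  assume "comp_fn A n a"
  then have "comp_fn A n (\<lambda>xs. LEAST k. a xs < triangle (Suc k))"
    by (intro comp_intros) (assumption, rule ex_less_triangle)
  then show ?thesis by (simp add: prod_decode_sum_def)
qed

lemma comp_fn_fst_prod_decode[comp_intros]:
  "comp_fn A n a \<Longrightarrow> comp_fn A n (\<lambda>xs. fst (prod_decode (a xs)))"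
proof -
  assume "comp_fn A n a"
  then have "comp_fn A n (\<lambda>xs. a xs - triangle (prod_decode_sum (a xs)))" by (intro comp_intros)
  then show ?thesis by (simp add: fst_prod_decode_eq)
qed

lemma comp_fn_snd_prod_decode[comp_intros]:
  "comp_fn A n a \<Longrightarrow> comp_fn A n (\<lambda>xs. snd (prod_decode (a xs)))"
proof -
  assume "comp_fn A n a"
  then have "comp_fn A n (\<lambda>xs. prod_decode_sum (a xs) - fst (prod_decode (a xs)))" by (intro comp_intros)
  then show ?thesis by (simp add: snd_prod_decode_eq[symmetric])
qed

definition code_hd :: "nat \<Rightarrow> nat" where "code_hd c = (if c = 0 then 0 else fst (prod_decode (c - 1)))"

definition code_tl :: "nat \<Rightarrow> nat" where "code_tl c = (if c = 0 then 0 else snd (prod_decode (c - 1)))"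

lemma comp_fn_code_hd[comp_intros]:
  "comp_fn A n a \<Longrightarrow> comp_fn A n (\<lambda>xs. code_hd (a xs))"
  unfolding code_hd_def by (intro comp_intros)

lemma comp_fn_code_tl[comp_intros]:
  "comp_fn A n a \<Longrightarrow> comp_fn A n (\<lambda>xs. code_tl (a xs))"
  unfolding code_tl_def by (intro comp_intros)

lemma code_hd_list_encode: "code_hd (list_encode xs) = (if xs = [] then 0 else hd xs)"
  by (cases xs) (auto simp: code_hd_def)

lemma code_tl_list_encode: "code_tl (list_encode xs) = list_encode (tl xs)"
  by (cases xs) (auto simp: code_tl_def)

lemma code_tl_funpow: "(code_tl ^^ i) (list_encode xs) = list_encode (drop i xs)"
  by (induction i) (auto simp: code_tl_list_encode drop_Suc tl_drop)

definition code_nth :: "nat \<Rightarrow> nat \<Rightarrow> nat" where "code_nth c i = code_hd ((code_tl ^^ i) c)"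

definition code_length :: "nat \<Rightarrow> nat" where "code_length c = (LEAST i. (code_tl ^^ i) c = 0)"

lemma code_nth_list_encode: "i < length xs \<Longrightarrow> code_nth (list_encode xs) i = xs ! i"
  by (auto simp: code_nth_def code_tl_funpow code_hd_list_encode hd_drop_conv_nth)

lemma list_encode_eq_0_iff: "list_encode xs = 0 \<longleftrightarrow> xs = []"
  by (cases xs) auto

lemma code_length_list_encode: "code_length (list_encode xs) = length xs"
  unfolding code_length_def code_tl_funpow list_encode_eq_0_iff
  by (rule Least_equality) auto

lemma comp_fn_code_nth[comp_intros]:
  "comp_fn A n a \<Longrightarrow> comp_fn A n b \<Longrightarrow> comp_fn A n (\<lambda>xs. code_nth (a xs) (b xs))"
proof -
  assume a: "comp_fn A n a" "comp_fn A n b"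
  have "comp_fn A n (\<lambda>xs. code_hd ((code_tl ^^ b xs) (a xs)))" by (intro comp_intros a) simp
  then show ?thesis by (simp add: code_nth_def)
qed

lemma comp_fn_code_length[comp_intros]:
  "comp_fn A n a \<Longrightarrow> comp_fn A n (\<lambda>xs. code_length (a xs))"
proof -
  assume a: "comp_fn A n a"
  have "(code_tl ^^ length (list_decode c)) c = 0" for c
    using code_tl_funpow[of "length (list_decode c)" "list_decode c"] by simp
  then have "comp_fn A n (\<lambda>xs. LEAST i. (code_tl ^^ i) (a xs) = 0)"
    by (intro comp_intros comp_fn_tl[OF a] a) auto
  then show ?thesis by (simp add: code_length_def)
qed

lemma comp_fn_list_encode_map:
  assumes F: "comp_fn A (Suc n) (\<lambda>ws. F (hd ws) (tl ws))" and L: "comp_fn A n L"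
  shows "comp_fn A n (\<lambda>xs. list_encode (map (\<lambda>i. F i xs) [0..<L xs]))"
proof -
  have e: "j \<le> l \<Longrightarrow> rec_nat 0 (\<lambda>k r. Suc (prod_encode (F (l - Suc k) xs, r))) j
      = list_encode (map (\<lambda>i. F i xs) [l - j..<l])" for j l xs
  proof (induction j)
    case 0 then show ?case by simp
  next
    case (Suc j)
    then have "[l - Suc j..<l] = (l - Suc j) # [l - j..<l]"
      by (metis Suc_diff_Suc Suc_le_lessD diff_less upt_conv_Cons zero_less_Suc less_le_trans)
    with Suc show ?case by simp
  qed
  have Ft: "comp_fn A (Suc (Suc n)) (\<lambda>ws. F (L (tl (tl ws)) - Suc (ws ! 0)) (tl (tl ws)))"
  proof -
    have "comp_fn A (Suc (Suc n)) (\<lambda>ws. (\<lambda>zs. F (hd zs) (tl zs))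
        ((L (tl (tl ws)) - Suc (ws ! 0)) # map (\<lambda>G. G ws) (map (\<lambda>i ws. tl (tl ws) ! i) [0..<n])))"
      by (rule comp_fn_compose_Cons[OF F]) (auto intro!: comp_intros L)
    moreover have "map (\<lambda>i. tl (tl ws) ! i) [0..<n] = tl (tl ws)"
      if "length ws = Suc (Suc n)" for ws :: "nat list"
      using that by (intro map_nth_eq) simp
    ultimately show ?thesis by (elim comp_fn_cong) (simp add: comp_def)
  qed
  have "comp_fn A n (\<lambda>xs. rec_nat 0 (\<lambda>k r. Suc (prod_encode (F (L xs - Suc k) xs, r))) (L xs))"
    by (rule comp_fn_rec_nat) (auto intro!: comp_intros L Ft)
  then show ?thesis by (simp add: e)
qed

lemma map_nth_add_eq_drop:
  "length ws = j + m \<Longrightarrow> map (\<lambda>i. ws ! (j + i)) [0..<m] = drop j ws"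
  by (rule nth_equalityI) auto

lemma comp_fn_drop1:
  assumes "comp_fn A (Suc m) F" "comp_fn A N a" "N = j + m"
  shows "comp_fn A N (\<lambda>ws. F (a ws # drop j ws))"
proof -
  have "comp_fn A N (\<lambda>ws. F (map (\<lambda>G. G ws) (a # map (\<lambda>i ws. ws ! (j + i)) [0..<m])))"
    by (rule comp_fn_compose[OF assms(1)]) (insert assms, auto intro!: comp_fn_proj)
  then show ?thesis by (rule comp_fn_cong) (simp add: comp_def map_nth_add_eq_drop assms(3))
qed

lemma comp_fn_drop2:
  assumes "comp_fn A (Suc (Suc m)) F" "comp_fn A N a" "comp_fn A N b" "N = j + m"
  shows "comp_fn A N (\<lambda>ws. F (a ws # b ws # drop j ws))"
proof -
  have "comp_fn A N (\<lambda>ws. F (map (\<lambda>G. G ws) (a # b # map (\<lambda>i ws. ws ! (j + i)) [0..<m])))"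
    by (rule comp_fn_compose[OF assms(1)]) (insert assms, auto intro!: comp_fn_proj)
  then show ?thesis by (rule comp_fn_cong) (simp add: comp_def map_nth_add_eq_drop assms(4))
qed

lemma comp_fn_drop3:
  assumes "comp_fn A (Suc (Suc (Suc m))) F" "comp_fn A N a" "comp_fn A N b" "comp_fn A N c" "N = j + m"
  shows "comp_fn A N (\<lambda>ws. F (a ws # b ws # c ws # drop j ws))"
proof -
  have "comp_fn A N (\<lambda>ws. F (map (\<lambda>G. G ws) (a # b # c # map (\<lambda>i ws. ws ! (j + i)) [0..<m])))"
    by (rule comp_fn_compose[OF assms(1)]) (insert assms, auto intro!: comp_fn_proj)
  then show ?thesis by (rule comp_fn_cong) (simp add: comp_def map_nth_add_eq_drop assms(5))
qed

section \<open>Clocked evaluation\<close>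

text \<open>In \<open>eval_clocked p t xs\<close> the value \<open>Suc y\<close> means that \<open>p\<close> yields \<open>y\<close> when every
  \<open>\<mu>\<close>-search is cut off at \<open>t\<close>, and \<open>0\<close> means no result; queries answer as for the empty oracle.\<close>

fun clocked_mu :: "(nat \<Rightarrow> nat) \<Rightarrow> nat \<Rightarrow> nat" where
  "clocked_mu w 0 = 0"
| "clocked_mu w (Suc k) = (if clocked_mu w k \<noteq> 0 then clocked_mu w k
     else if w k = 0 then 1 else if w k = 1 then Suc (Suc k) else 0)"

fun eval_clocked :: "rf \<Rightarrow> nat \<Rightarrow> nat list \<Rightarrow> nat" where
  "eval_clocked Zero t xs = 1"
| "eval_clocked Succ t xs = Suc (Suc (arg0 xs))"
| "eval_clocked (Proj i) t xs = Suc (if i < length xs then xs ! i else 0)"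
| "eval_clocked Query t xs = 1"
| "eval_clocked (Comp f gs) t xs = (if 0 \<in> set (map (\<lambda>g. eval_clocked g t xs) gs) then 0
      else eval_clocked f t (map (\<lambda>g. eval_clocked g t xs - 1) gs))"
| "eval_clocked (PrimRec f g) t [] = 0"
| "eval_clocked (PrimRec f g) t (n # xs) =
     rec_nat (eval_clocked f t xs) (\<lambda>k r. if r = 0 then 0 else eval_clocked g t (k # (r - 1) # xs)) n"
| "eval_clocked (Mu f) t xs = (if 2 \<le> clocked_mu (\<lambda>k. eval_clocked f t (k # xs)) t
      then clocked_mu (\<lambda>k. eval_clocked f t (k # xs)) t - 1 else 0)"

lemma clocked_mu_eq: "clocked_mu w j = (if \<exists>k<j. w k < 2
    then (if w (LEAST k. w k < 2) = 0 then 1 else Suc (Suc (LEAST k. w k < 2))) else 0)"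
proof (induction j)
  case (Suc j)
  show ?case
  proof (cases "\<exists>k<j. w k < 2")
    case True
    then have "clocked_mu w j \<noteq> 0" using Suc by auto
    with True Suc show ?thesis by (auto simp: less_Suc_eq)
  next
    case False
    then have m0: "clocked_mu w j = 0" using Suc by simp
    show ?thesis
    proof (cases "w j < 2")
      case True
      have "(LEAST k. w k < 2) = j"
        by (rule Least_equality) (use True False in \<open>auto simp: not_less\<close>)
      with True False m0 show ?thesis by auto
    next
      case f2: False
      then have "\<not> (\<exists>k<Suc j. w k < 2)" using False by (auto simp: less_Suc_eq)
      with m0 f2 show ?thesis by auto
    qed
  qed
qed simp

lemma clocked_mu_eq_SucSuc_iff:
  "clocked_mu w j = Suc (Suc y) \<longleftrightarrow> y < j \<and> w y = 1 \<and> (\<forall>k<y. 2 \<le> w k)"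
proof
  assume m: "clocked_mu w j = Suc (Suc y)"
  then have ex: "\<exists>k<j. w k < 2" by (auto simp: clocked_mu_eq split: if_splits)
  with m have y: "y = (LEAST k. w k < 2)" and nz: "w (LEAST k. w k < 2) \<noteq> 0"
    by (auto simp: clocked_mu_eq split: if_splits)
  from ex obtain k where "k < j" "w k < 2" by auto
  then have "y < j" unfolding y by (meson Least_le le_less_trans)
  moreover have "w y < 2" unfolding y using ex by (metis LeastI)
  moreover have "\<forall>k<y. 2 \<le> w k" unfolding y using not_less_Least by fastforce
  ultimately show "y < j \<and> w y = 1 \<and> (\<forall>k<y. 2 \<le> w k)" using nz y by simp
next
  assume a: "y < j \<and> w y = 1 \<and> (\<forall>k<y. 2 \<le> w k)"
  then have "(LEAST k. w k < 2) = y"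
    by (intro Least_equality) (auto simp: not_less)
  with a show "clocked_mu w j = Suc (Suc y)" unfolding clocked_mu_eq by auto
qed

lemma clocked_mu_rec_nat: "clocked_mu w j = rec_nat 0 (\<lambda>k st. if st \<noteq> 0 then st
    else if w k = 0 then 1 else if w k = 1 then Suc (Suc k) else 0) j"
  by (induction j) auto

lemma eval_clocked_Mu_eq_Suc_iff:
  "eval_clocked (Mu f) t xs = Suc y \<longleftrightarrow>
     y < t \<and> eval_clocked f t (y # xs) = 1 \<and> (\<forall>k<y. 2 \<le> eval_clocked f t (k # xs))"
proof -
  have "(if 2 \<le> m then m - 1 else 0) = Suc y \<longleftrightarrow> m = Suc (Suc y)" for m :: nat by auto
  then show ?thesis
    using clocked_mu_eq_SucSuc_iff[of "\<lambda>k. eval_clocked f t (k # xs)" t y]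
    by (simp add: eval_clocked.simps(8))
qed

lemma eval_clocked_PrimRec_0 [simp]: "eval_clocked (PrimRec f g) t (0 # xs) = eval_clocked f t xs"
  by simp

lemma eval_clocked_PrimRec_Suc [simp]: "eval_clocked (PrimRec f g) t (Suc n # xs) =
    (case eval_clocked (PrimRec f g) t (n # xs) of 0 \<Rightarrow> 0 | Suc r \<Rightarrow> eval_clocked g t (n # r # xs))"
  by (simp split: nat.split)

declare eval_clocked.simps(7,8) [simp del]

lemma eval_clocked_Comp_eq_Suc_iff: "eval_clocked (Comp f gs) t xs = Suc y \<longleftrightarrow>
    (\<exists>ys. list_all2 (\<lambda>g y. eval_clocked g t xs = Suc y) gs ys \<and> eval_clocked f t ys = Suc y)"
proof -
  have "list_all2 (\<lambda>g y. eval_clocked g t xs = Suc y) gs ys \<longleftrightarrow>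
      0 \<notin> set (map (\<lambda>g. eval_clocked g t xs) gs) \<and> ys = map (\<lambda>g. eval_clocked g t xs - 1) gs" for ys
    by (induction gs arbitrary: ys) (auto simp: list_all2_Cons1)
  then show ?thesis by auto
qed

lemma eval_clocked_sound: "eval_clocked p t xs = Suc y \<Longrightarrow> eval {} p xs y"
proof (induction p arbitrary: xs y)
  case (Comp f gs)
  from Comp.prems obtain ys
    where "list_all2 (\<lambda>g y. eval_clocked g t xs = Suc y) gs ys" "eval_clocked f t ys = Suc y"
    unfolding eval_clocked_Comp_eq_Suc_iff by blast
  moreover from this(1) have "list_all2 (\<lambda>g y. eval {} g xs y) gs ys"
    by (rule list.rel_mono_strong) (use Comp.IH(2) in blast)
  ultimately show ?case using Comp.IH(1) by (blast intro: eval.comp)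
next
  case (PrimRec f g)
  then obtain n xs' where xs: "xs = n # xs'" by (cases xs) auto
  have "eval_clocked (PrimRec f g) t (n # xs') = Suc y \<Longrightarrow> eval {} (PrimRec f g) (n # xs') y" for y
  proof (induction n arbitrary: y)
    case 0 with PrimRec.IH(1) show ?case by (auto intro: eval.prec0)
  next
    case (Suc n)
    then obtain r
      where "eval_clocked (PrimRec f g) t (n # xs') = Suc r" "eval_clocked g t (n # r # xs') = Suc y"
      by (auto split: nat.splits)
    with Suc.IH PrimRec.IH(2) show ?case by (blast intro: eval.precS)
  qed
  with PrimRec.prems xs show ?case by simp
next
  case (Mu f)
  from Mu.prems have y: "eval_clocked f t (y # xs) = Suc 0" and below: "\<forall>k<y. 2 \<le> eval_clocked f t (k # xs)"
    unfolding eval_clocked_Mu_eq_Suc_iff by simp_all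
  have "\<exists>v. v \<noteq> 0 \<and> eval {} f (m # xs) v" if "m < y" for m
  proof -
    from below that obtain v where "eval_clocked f t (m # xs) = Suc (Suc v)"
      by (metis add_2_eq_Suc le_iff_add)
    with Mu.IH show ?thesis by blast
  qed
  with Mu.IH y show ?case by (blast intro: eval.mu)
next
  case (Proj i)
  then show ?case using eval.proj[of "{}" i xs] by simp
next
  case Query
  then show ?case using eval.query[of "{}" xs] by simp
qed (auto intro: eval.zero eval.succ)

lemma eval_clocked_mono:
  "eval_clocked p t xs = Suc y \<Longrightarrow> t \<le> t' \<Longrightarrow> eval_clocked p t' xs = Suc y"
proof (induction p arbitrary: xs y)
  case (Comp f gs)
  from Comp.prems obtain ys
    where "list_all2 (\<lambda>g y. eval_clocked g t xs = Suc y) gs ys" "eval_clocked f t ys = Suc y"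
    unfolding eval_clocked_Comp_eq_Suc_iff by blast
  moreover from this(1) have "list_all2 (\<lambda>g y. eval_clocked g t' xs = Suc y) gs ys"
    by (rule list.rel_mono_strong) (use Comp.IH(2) Comp.prems(2) in blast)
  ultimately show ?case using Comp.IH(1) Comp.prems(2) unfolding eval_clocked_Comp_eq_Suc_iff by blast
next
  case (PrimRec f g)
  then obtain n xs' where xs: "xs = n # xs'" by (cases xs) auto
  have "eval_clocked (PrimRec f g) t (n # xs') = Suc y \<Longrightarrow> eval_clocked (PrimRec f g) t' (n # xs') = Suc y"
    for y
  proof (induction n arbitrary: y)
    case 0 with PrimRec.IH(1) PrimRec.prems(2) show ?case by simp
  next
    case (Suc n)
    then obtain r
      where "eval_clocked (PrimRec f g) t (n # xs') = Suc r" "eval_clocked g t (n # r # xs') = Suc y"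
      by (auto split: nat.splits)
    with Suc.IH PrimRec.IH(2) PrimRec.prems(2) show ?case by simp
  qed
  with PrimRec.prems xs show ?case by simp
next
  case (Mu f)
  from Mu.prems(1) have "y < t" "eval_clocked f t (y # xs) = 1"
    and below: "\<forall>k<y. 2 \<le> eval_clocked f t (k # xs)"
    unfolding eval_clocked_Mu_eq_Suc_iff by simp_all
  moreover have "eval_clocked f t' (k # xs) = eval_clocked f t (k # xs)" if "k < y" for k
  proof -
    from below that obtain v where "eval_clocked f t (k # xs) = Suc (Suc v)"
      by (metis add_2_eq_Suc le_iff_add)
    with Mu.IH Mu.prems(2) show ?thesis by simp
  qed
  ultimately show ?case using Mu.IH Mu.prems(2) unfolding eval_clocked_Mu_eq_Suc_iff by auto
qed auto

lemma list_all2_eval_clocked_common_time: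
  assumes "list_all2 (\<lambda>g y. \<exists>t. eval_clocked g t xs = Suc y) gs ys"
  shows "\<exists>T. list_all2 (\<lambda>g y. eval_clocked g T xs = Suc y) gs ys"
  using assms
proof (induction rule: list_all2_induct)
  case (Cons g gs y ys)
  then obtain t T where "eval_clocked g t xs = Suc y" "list_all2 (\<lambda>g y. eval_clocked g T xs = Suc y) gs ys"
    by blast
  then show ?case
    by (intro exI[of _ "max t T"]) (auto elim!: list_all2_mono intro: eval_clocked_mono)
qed simp

lemma eval_clocked_Mu_complete:
  assumes "eval_clocked f t0 (n # xs) = 1" "\<forall>m<n. \<exists>t v. v \<noteq> 0 \<and> eval_clocked f t (m # xs) = Suc v"
  shows "\<exists>t. eval_clocked (Mu f) t xs = Suc n"
proof -
  obtain tm vm where tm: "\<forall>m<n. vm m \<noteq> 0 \<and> eval_clocked f (tm m) (m # xs) = Suc (vm m)"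
    using assms(2) by metis
  define T where "T = Suc (n + t0 + (\<Sum>m<n. tm m))"
  have "tm m \<le> T" if "m < n" for m
    using member_le_sum[of m "{..<n}" tm] that by (simp add: T_def)
  then have "eval_clocked f T (m # xs) = Suc (vm m)" if "m < n" for m
    using tm eval_clocked_mono that by blast
  moreover have "eval_clocked f T (n # xs) = 1"
    using eval_clocked_mono[of f t0 "n # xs" 0 T] assms(1) by (simp add: T_def)
  ultimately have "eval_clocked (Mu f) T xs = Suc n"
    using tm unfolding eval_clocked_Mu_eq_Suc_iff by (auto simp: T_def Suc_le_eq)
  then show ?thesis ..
qed

lemma eval_clocked_complete: "eval {} p xs y \<Longrightarrow> \<exists>t. eval_clocked p t xs = Suc y"
proof (induction rule: eval.induct)
  case (comp xs gs ys f z)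
  have "list_all2 (\<lambda>g y. \<exists>t. eval_clocked g t xs = Suc y) gs ys"
    using comp.IH(1) by (rule list_all2_mono) auto
  then obtain T where T: "list_all2 (\<lambda>g y. eval_clocked g T xs = Suc y) gs ys"
    using list_all2_eval_clocked_common_time by blast
  obtain tf where tf: "eval_clocked f tf ys = Suc z" using comp.IH(2) by auto
  have "list_all2 (\<lambda>g y. eval_clocked g (max T tf) xs = Suc y) gs ys"
    using T by (rule list_all2_mono) (erule eval_clocked_mono, simp)
  moreover have "eval_clocked f (max T tf) ys = Suc z" using eval_clocked_mono[OF tf] by simp
  ultimately have "eval_clocked (Comp f gs) (max T tf) xs = Suc z"
    unfolding eval_clocked_Comp_eq_Suc_iff by blast
  then show ?case ..
next
  case (precS f g n xs r y)
  obtain t1 t2 where t1: "eval_clocked (PrimRec f g) t1 (n # xs) = Suc r"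
    and t2: "eval_clocked g t2 (n # r # xs) = Suc y"
    using precS.IH by blast
  have "eval_clocked (PrimRec f g) (max t1 t2) (n # xs) = Suc r" using t1 by (rule eval_clocked_mono) simp
  moreover have "eval_clocked g (max t1 t2) (n # r # xs) = Suc y" using t2 by (rule eval_clocked_mono) simp
  ultimately show ?case by (intro exI[of _ "max t1 t2"]) simp
next
  case (mu f n xs)
  from mu.IH(1) obtain t0 where "eval_clocked f t0 (n # xs) = 1" by auto
  moreover from mu.IH(2) have "\<forall>m<n. \<exists>t v. v \<noteq> 0 \<and> eval_clocked f t (m # xs) = Suc v" by blast
  ultimately show ?case by (rule eval_clocked_Mu_complete)
qed auto

lemma comp_pred_list_ex:
  "\<forall>g\<in>set gs. comp_fn A n (F g) \<Longrightarrow> comp_pred A n (\<lambda>xs. \<exists>g\<in>set gs. F g xs = 0)"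
proof (induction gs)
  case Nil then show ?case by (simp add: comp_pred_const)
next
  case (Cons g gs)
  then have "comp_pred A n (\<lambda>xs. F g xs = 0 \<or> (\<exists>g\<in>set gs. F g xs = 0))" by (intro comp_intros) auto
  then show ?case by simp
qed

lemma comp_fn_eval_clocked_Comp:
  assumes "\<And>l. comp_fn A (Suc l) (\<lambda>ys. eval_clocked f (hd ys) (tl ys))"
    and "\<And>g l. g \<in> set gs \<Longrightarrow> comp_fn A (Suc l) (\<lambda>ys. eval_clocked g (hd ys) (tl ys))"
  shows "comp_fn A (Suc l) (\<lambda>ys. eval_clocked (Comp f gs) (hd ys) (tl ys))"
proof -
  have undef: "comp_pred A (Suc l) (\<lambda>ys. \<exists>g\<in>set gs. eval_clocked g (hd ys) (tl ys) = 0)"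
    by (rule comp_pred_list_ex) (use assms(2) in auto)
  have "comp_fn A (Suc l) (\<lambda>ys. (\<lambda>zs. eval_clocked f (hd zs) (tl zs))
      (map (\<lambda>G. G ys) (hd # map (\<lambda>g ys. eval_clocked g (hd ys) (tl ys) - 1) gs)))"
    by (rule comp_fn_compose[OF assms(1)[of "length gs"]]) (auto intro!: comp_intros assms(2))
  then have "comp_fn A (Suc l)
      (\<lambda>ys. eval_clocked f (hd ys) (map (\<lambda>g. eval_clocked g (hd ys) (tl ys) - 1) gs))"
    by (simp add: comp_def)
  with undef have "comp_fn A (Suc l) (\<lambda>ys. if \<exists>g\<in>set gs. eval_clocked g (hd ys) (tl ys) = 0 then 0
      else eval_clocked f (hd ys) (map (\<lambda>g. eval_clocked g (hd ys) (tl ys) - 1) gs))"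
    by (intro comp_fn_if comp_fn_const)
  then show ?thesis by (rule comp_fn_cong) auto
qed

lemma comp_fn_eval_clocked_PrimRec:
  assumes "\<And>l. comp_fn A (Suc l) (\<lambda>ys. eval_clocked f (hd ys) (tl ys))"
    and "\<And>l. comp_fn A (Suc l) (\<lambda>ys. eval_clocked g (hd ys) (tl ys))"
  shows "comp_fn A (Suc l) (\<lambda>ys. eval_clocked (PrimRec f g) (hd ys) (tl ys))"
proof (cases l)
  case 0
  show ?thesis
    by (rule comp_fn_cong[OF comp_fn_const[of A _ 0]]) (use 0 in \<open>auto simp: length_Suc_conv\<close>)
next
  case (Suc l')
  define N where "N = Suc (Suc (Suc (Suc l')))"
  have z: "comp_fn A (Suc (Suc l')) (\<lambda>ys. eval_clocked f (hd ys) (drop 2 ys))"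
    using comp_fn_drop1[OF assms(1)[of l'] comp_fn_hd[of A "Suc l'"], where j=2] by simp
  have "comp_fn A N (\<lambda>ws. eval_clocked g (ws ! 2) (ws ! 0 # (ws ! 1 - 1) # drop 4 ws))"
    using comp_fn_drop3[OF assms(2)[of "Suc (Suc l')"] comp_fn_proj[of 2 N A] comp_fn_proj[of 0 N A]
        comp_fn_pred[OF comp_fn_proj[of 1 N A]], where j=4]
    by (simp add: N_def)
  then have "comp_fn A N
      (\<lambda>ws. if ws ! 1 = 0 then 0 else eval_clocked g (ws ! 2) (ws ! 0 # (ws ! 1 - 1) # drop 4 ws))"
    by (intro comp_intros) (auto simp: N_def)
  then have s: "comp_fn A N (\<lambda>ws. if ws ! 1 = 0 then 0
      else eval_clocked g (hd (tl (tl ws))) (ws ! 0 # (ws ! 1 - 1) # drop 2 (tl (tl ws))))"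
    by (rule comp_fn_cong) (auto simp: N_def length_Suc_conv numeral_2_eq_2 numeral_3_eq_3 eval_nat_numeral)
  have "comp_fn A (Suc (Suc l')) (\<lambda>ys. rec_nat (eval_clocked f (hd ys) (drop 2 ys))
      (\<lambda>k r. if r = 0 then 0 else eval_clocked g (hd ys) (k # (r - 1) # drop 2 ys)) (ys ! 1))"
    by (rule comp_fn_rec_nat) (rule z, (rule comp_fn_proj, simp), use s in \<open>simp add: N_def\<close>)
  then show ?thesis unfolding Suc
    by (rule comp_fn_cong)
      (clarsimp simp: length_Suc_conv,
       simp only: list.sel drop_Suc_Cons numeral_2_eq_2 drop_0 eval_clocked.simps(7))
qed

lemma comp_fn_eval_clocked_Mu:
  assumes "\<And>l. comp_fn A (Suc l) (\<lambda>ys. eval_clocked f (hd ys) (tl ys))"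
  shows "comp_fn A (Suc l) (\<lambda>ys. eval_clocked (Mu f) (hd ys) (tl ys))"
proof -
  define N where "N = Suc (Suc (Suc l))"
  have "comp_fn A N (\<lambda>ws. eval_clocked f (ws ! 2) (ws ! 0 # drop 3 ws))"
    using comp_fn_drop2[OF assms[of "Suc l"] comp_fn_proj[of 2 N A] comp_fn_proj[of 0 N A], where j=3]
    by (simp add: N_def)
  then have "comp_fn A N (\<lambda>ws. if ws ! 1 \<noteq> 0 then ws ! 1
      else if eval_clocked f (ws ! 2) (ws ! 0 # drop 3 ws) = 0 then 1
      else if eval_clocked f (ws ! 2) (ws ! 0 # drop 3 ws) = 1 then Suc (Suc (ws ! 0)) else 0)"
    by (intro comp_intros) (auto simp: N_def)
  then have s: "comp_fn A N (\<lambda>ws. if ws ! 1 \<noteq> 0 then ws ! 1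
      else if eval_clocked f (hd (tl (tl ws))) (ws ! 0 # tl (tl (tl ws))) = 0 then 1
      else if eval_clocked f (hd (tl (tl ws))) (ws ! 0 # tl (tl (tl ws))) = 1
      then Suc (Suc (ws ! 0)) else 0)"
    by (rule comp_fn_cong) (auto simp: N_def length_Suc_conv numeral_2_eq_2 numeral_3_eq_3)
  have "comp_fn A (Suc l) (\<lambda>ys. rec_nat 0 (\<lambda>k st. if st \<noteq> 0 then st
      else if eval_clocked f (hd ys) (k # tl ys) = 0 then 1
      else if eval_clocked f (hd ys) (k # tl ys) = 1 then Suc (Suc k) else 0) (hd ys))"
    by (rule comp_fn_rec_nat) (rule comp_fn_const, rule comp_fn_hd, use s in \<open>simp add: N_def\<close>)
  then have "comp_fn A (Suc l) (\<lambda>ys. clocked_mu (\<lambda>k. eval_clocked f (hd ys) (k # tl ys)) (hd ys))"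
    by (simp add: clocked_mu_rec_nat)
  then show ?thesis unfolding eval_clocked.simps(8) by (intro comp_intros)
qed

lemma comp_fn_eval_clocked: "comp_fn A (Suc l) (\<lambda>ys. eval_clocked p (hd ys) (tl ys))"
proof (induction p arbitrary: l)
  case Succ
  show ?case
  proof (cases l)
    case 0
    show ?thesis
      by (rule comp_fn_cong[OF comp_fn_const[of A _ 2]]) (use 0 in \<open>auto simp: arg0_def length_Suc_conv\<close>)
  next
    case (Suc l')
    have "comp_fn A (Suc l) (\<lambda>ys. Suc (Suc (tl ys ! 0)))" by (intro comp_intros) (simp add: Suc)
    then show ?thesis by (rule comp_fn_cong) (auto simp: arg0_def Suc length_Suc_conv)
  qed
next
  case (Proj i)
  show ?case
  proof (cases "i < l")
    case True
    have "comp_fn A (Suc l) (\<lambda>ys. Suc (tl ys ! i))" by (intro comp_intros True)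
    then show ?thesis by (rule comp_fn_cong) (use True in auto)
  next
    case False
    show ?thesis by (rule comp_fn_cong[OF comp_fn_const[of A _ 1]]) (use False in auto)
  qed
next
  case (Comp f gs)
  then show ?case by (intro comp_fn_eval_clocked_Comp)
next
  case (PrimRec f g)
  then show ?case by (rule comp_fn_eval_clocked_PrimRec)
next
  case (Mu f)
  then show ?case by (rule comp_fn_eval_clocked_Mu)
qed (simp_all add: comp_fn_const)

section \<open>Codes of binary strings\<close>

definition pad_ones :: "nat \<Rightarrow> nat \<Rightarrow> nat" where
  "pad_ones c k =
     list_encode (map (\<lambda>i. if i < code_length c then code_nth c i else 1) [0..<code_length c + k])"

lemma code_length_pad_ones: "code_length (pad_ones c k) = code_length c + k"
  by (simp add: pad_ones_def code_length_list_encode)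

lemma code_nth_pad_ones:
  "j < code_length c + k \<Longrightarrow> code_nth (pad_ones c k) j = (if j < code_length c then code_nth c j else 1)"
  by (simp add: pad_ones_def code_nth_list_encode)

lemma list_encode_code_nth: "list_encode (map (code_nth c) [0..<code_length c]) = c"
proof -
  obtain L where c: "c = list_encode L" by (metis list_decode_inverse)
  have "map (code_nth c) [0..<code_length c] = L" unfolding c code_length_list_encode
    by (rule nth_equalityI) (auto simp: code_nth_list_encode)
  then show ?thesis using c by simp
qed

lemma code_length_0: "code_length 0 = 0"
  using code_length_list_encode[of "[]"] by simp

definition prefix_code :: "nat \<Rightarrow> nat \<Rightarrow> bool" where
  "prefix_code c d \<longleftrightarrow> code_length c \<le> code_length d \<and> (\<forall>j<code_length c. code_nth c j = code_nth d j)"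

lemma prefix_code_refl: "prefix_code c c" by (simp add: prefix_code_def)

lemma prefix_code_trans:
  "prefix_code a b \<Longrightarrow> prefix_code b c \<Longrightarrow> prefix_code a c"
  unfolding prefix_code_def by (metis order_trans less_le_trans)

lemma prefix_code_pad_ones: "prefix_code c (pad_ones c k)"
  by (simp add: prefix_code_def code_length_pad_ones code_nth_pad_ones)

definition bit_code :: "nat \<Rightarrow> bool" where
  "bit_code c \<longleftrightarrow> (\<forall>j<code_length c. code_nth c j \<le> 1)"

lemma bit_code_pad_ones: "bit_code c \<Longrightarrow> bit_code (pad_ones c k)"
  by (auto simp: bit_code_def code_length_pad_ones code_nth_pad_ones)

lemma code_length_str_code: "code_length (str_code \<sigma>) = length \<sigma>"
  by (simp add: str_code_def code_length_list_encode)

lemma code_nth_str_code: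
  "j < length \<sigma> \<Longrightarrow> code_nth (str_code \<sigma>) j = (if \<sigma> ! j then 1 else 0)"
  by (simp add: str_code_def code_nth_list_encode)

lemma bit_code_str_code: "bit_code (str_code \<sigma>)"
  by (simp add: bit_code_def code_length_str_code code_nth_str_code)

lemma prefix_code_str_code_append: "prefix_code (str_code \<sigma>) (str_code (\<sigma> @ \<rho>))"
  by (simp add: prefix_code_def code_length_str_code code_nth_str_code nth_append)

lemma str_code_eq:
  assumes "bit_code c" "length \<sigma> = code_length c" "\<And>j. j < length \<sigma> \<Longrightarrow> \<sigma> ! j \<longleftrightarrow> code_nth c j = 1"
  shows "str_code \<sigma> = c"
proof -
  have "code_nth c j \<le> 1" if "j < code_length c" for j using assms(1) that by (simp add: bit_code_def)
  then have "map (\<lambda>b. if b then 1 else 0) \<sigma> = map (code_nth c) [0..<code_length c]"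
    using assms(2,3) by (intro nth_equalityI) (auto simp: le_Suc_eq)
  then show ?thesis unfolding str_code_def using list_encode_code_nth[of c] by simp
qed


lemma comp_fn_pad_ones[comp_intros]:
  "comp_fn A n a \<Longrightarrow> comp_fn A n b \<Longrightarrow> comp_fn A n (\<lambda>xs. pad_ones (a xs) (b xs))"
proof -
  assume a: "comp_fn A n a" and b: "comp_fn A n b"
  have "comp_fn A (Suc n)
      (\<lambda>ws. if hd ws < code_length (a (tl ws)) then code_nth (a (tl ws)) (hd ws) else 1)"
    by (intro comp_intros comp_fn_tl a)
  then show ?thesis unfolding pad_ones_def
    by (rule comp_fn_list_encode_map) (intro comp_intros a b)
qed

lemma comp_pred_prefix_code[comp_intros]:
  "comp_fn A n a \<Longrightarrow> comp_fn A n b \<Longrightarrow> comp_pred A n (\<lambda>xs. prefix_code (a xs) (b xs))"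
  unfolding prefix_code_def by (intro comp_intros comp_fn_tl) simp_all

lemma comp_pred_bit_code[comp_intros]:
  "comp_fn A n a \<Longrightarrow> comp_pred A n (\<lambda>xs. bit_code (a xs))"
  unfolding bit_code_def by (intro comp_intros comp_fn_tl) simp_all

section \<open>Searching for accepted extensions\<close>

lemma rf_num_inj: "rf_num p = rf_num q \<Longrightarrow> p = q"
proof (induction p arbitrary: q)
  case (Comp f gs)
  from Comp.prems obtain f' gs' where q: "q = Comp f' gs'" by (cases q) auto
  with Comp.prems have 1: "rf_num f = rf_num f'" and 2: "map rf_num gs = map rf_num gs'"
    by (auto simp: list_encode_eq)
  have "gs = gs'" using 2 Comp.IH(2)
  proof (induction gs arbitrary: gs')
    case Nil then show ?case by simp
  next
    case (Cons g gs)
    then obtain g' gs0 where "gs' = g' # gs0" by (cases gs') auto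
    with Cons show ?case by auto
  qed
  with 1 Comp.IH(1) q show ?case by simp
next
  case (PrimRec f g)
  then show ?case by (cases q) auto
next
  case (Mu f)
  then show ?case by (cases q) auto
qed (case_tac q; auto)+

lemma rf_num_inv_mu:
  "rf_num p = prod_encode (5, x) \<Longrightarrow> \<exists>f. p = Mu f \<and> rf_num f = x"
  by (cases p) auto

lemma rf_num_inv_comp: "rf_num p = prod_encode (3, prod_encode (x, list_encode ys)) \<Longrightarrow>
   \<exists>f gs. p = Comp f gs \<and> rf_num f = x \<and> map rf_num gs = ys"
  by (cases p) (auto simp: list_encode_eq)

definition ext_candidate :: "nat \<Rightarrow> nat \<Rightarrow> bool" where
  "ext_candidate m c \<longleftrightarrow> bit_code (fst (prod_decode m)) \<and> prefix_code c (fst (prod_decode m))"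

lemma comp_pred_ext_candidate[comp_intros]:
  "comp_fn A n a \<Longrightarrow> comp_fn A n b \<Longrightarrow> comp_pred A n (\<lambda>xs. ext_candidate (a xs) (b xs))"
  unfolding ext_candidate_def by (intro comp_intros)

definition search_test :: "nat list \<Rightarrow> nat" where
  "search_test xs = (if ext_candidate (xs ! 0) (xs ! 1) \<and> xs ! 2 \<noteq> 0 then 0 else 1)"

definition program_for :: "nat \<Rightarrow> (nat list \<Rightarrow> nat) \<Rightarrow> rf" where
  "program_for n F = (SOME p. \<forall>xs. length xs = n \<longrightarrow> eval {} p xs (F xs))"

lemma eval_program_for_iff:
  assumes "comp_fn {} n F" "length xs = n"
  shows "eval {} (program_for n F) xs y \<longleftrightarrow> y = F xs"
proof -
  have "\<forall>xs. length xs = n \<longrightarrow> eval {} (program_for n F) xs (F xs)"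
    using assms(1) unfolding comp_fn_def program_for_def by (rule someI_ex)
  with assms(2) show ?thesis using eval_det by blast
qed

definition test_prog :: rf where "test_prog = program_for 3 search_test"
definition fst_prog :: rf where "fst_prog = program_for 2 (\<lambda>xs. fst (prod_decode (xs ! 0)))"
definition snd_prog :: rf where "snd_prog = program_for 2 (\<lambda>xs. snd (prod_decode (xs ! 0)))"

lemma eval_test_prog_iff: "eval {} test_prog [m, c, v] y \<longleftrightarrow> y = search_test [m, c, v]"
proof -
  have "comp_fn {} 3 search_test" unfolding search_test_def by (intro comp_intros) simp_all
  then show ?thesis unfolding test_prog_def by (rule eval_program_for_iff) simp
qed

lemma eval_fst_prog_iff: "eval {} fst_prog [m, c] y \<longleftrightarrow> y = fst (prod_decode m)"
  unfolding fst_prog_def using eval_program_for_iff[of 2] by (simp add: comp_intros)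

lemma eval_snd_prog_iff: "eval {} snd_prog [m, c] y \<longleftrightarrow> y = snd (prod_decode m)"
  unfolding snd_prog_def using eval_program_for_iff[of 2] by (simp add: comp_intros)

text \<open>On input \<open>[\<langle>\<tau>, t\<rangle>, c]\<close> the program \<open>search_body r\<close> runs \<open>r\<close> on \<open>[t, \<tau>]\<close>;
  the output \<open>0\<close> signals a witness: \<open>\<tau>\<close> is a binary extension of \<open>c\<close> and \<open>r\<close> gives a nonzero value.
  Thus \<open>search_prog r c\<close> halts iff there is a witness (provided \<open>r\<close> halts on all smaller
  candidates), and \<open>witness_prog r c m\<close> halts iff \<open>m\<close> is a witness.\<close>

definition search_body :: "rf \<Rightarrow> rf" where
  "search_body r = Comp test_prog [Proj 0, Proj 1, Comp r [snd_prog, fst_prog]]"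

definition search_prog :: "rf \<Rightarrow> nat \<Rightarrow> rf" where
  "search_prog r c = Mu (Comp (search_body r) [Proj 0, const_prog c])"

definition witness_prog :: "rf \<Rightarrow> nat \<Rightarrow> nat \<Rightarrow> rf" where
  "witness_prog r c m = Mu (Comp (search_body r) [const_prog m, const_prog c])"

lemma eval_search_body_iff: "eval {} (search_body r) [m, c] y \<longleftrightarrow>
    (\<exists>v. eval {} r [snd (prod_decode m), fst (prod_decode m)] v \<and> y = search_test [m, c, v])"
proof -
  have "list_all2 (\<lambda>g y. eval {} g [m, c] y) [Proj 0, Proj 1, Comp r [snd_prog, fst_prog]] ys \<longleftrightarrow>
      (\<exists>v. ys = [m, c, v] \<and> eval {} r [snd (prod_decode m), fst (prod_decode m)] v)" for ys
    by (auto simp: list_all2_Cons1 eval_Comp_iff eval_Proj_iff eval_fst_prog_iff eval_snd_prog_iff)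
  then show ?thesis unfolding search_body_def eval_Comp_iff by (auto simp: eval_test_prog_iff)
qed

lemma eval_search_prog_iff: "eval {} (search_prog r c) [e] n \<longleftrightarrow>
    eval {} (search_body r) [n, c] 0 \<and> (\<forall>m<n. \<exists>y. y \<noteq> 0 \<and> eval {} (search_body r) [m, c] y)"
proof -
  have "eval {} (Comp (search_body r) [Proj 0, const_prog c]) [m, e] y \<longleftrightarrow> eval {} (search_body r) [m, c] y"
    for m y by (simp add: eval_Comp_iff list_all2_Cons1 eval_Proj_iff eval_const_prog_iff)
  then show ?thesis unfolding search_prog_def eval_Mu_iff by simp
qed

lemma search_prog_halts:
  assumes total: "\<forall>m. \<exists>y. eval {} (search_body R) [m, c] y" and "eval {} (search_body R) [m0, c] 0"
  shows "\<exists>n. eval {} (search_prog R c) [x] n"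
proof -
  let ?n = "LEAST m. eval {} (search_body R) [m, c] 0"
  have "eval {} (search_body R) [?n, c] 0" using assms(2) by (rule LeastI)
  moreover have "\<exists>y. y \<noteq> 0 \<and> eval {} (search_body R) [m, c] y" if "m < ?n" for m
    using total not_less_Least[OF that] by metis
  ultimately show ?thesis by (auto simp: eval_search_prog_iff)
qed

lemma witness_prog_halts_iff:
  "(\<exists>y. eval {} (witness_prog r c m) [e] y) \<longleftrightarrow> eval {} (search_body r) [m, c] 0"
proof -
  have "eval {} (Comp (search_body r) [const_prog m, const_prog c]) [x, e] y \<longleftrightarrow>
      eval {} (search_body r) [m, c] y"
    for x y by (simp add: eval_Comp_iff list_all2_Cons1 eval_const_prog_iff)
  then show ?thesis unfolding witness_prog_def eval_Mu_iff by auto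
qed

definition const_prog_code :: "nat \<Rightarrow> nat" where "const_prog_code c = rf_num (const_prog c)"

lemma const_prog_code_rec_nat:
  "const_prog_code c =
     rec_nat 0 (\<lambda>k r. prod_encode (3, prod_encode (prod_encode (1, 0), Suc (prod_encode (r, 0))))) c"
  by (induction c) (auto simp: const_prog_code_def prod_encode_def)

lemma comp_fn_const_prog_code[comp_intros]:
  "comp_fn A n a \<Longrightarrow> comp_fn A n (\<lambda>xs. const_prog_code (a xs))"
proof -
  assume a: "comp_fn A n a"
  have "comp_fn A n (\<lambda>xs.
      rec_nat 0 (\<lambda>k r. prod_encode (3, prod_encode (prod_encode (1, 0), Suc (prod_encode (r, 0))))) (a xs))"
    by (intro comp_intros a) auto
  then show ?thesis by (simp add: const_prog_code_rec_nat)
qed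

definition search_body_code :: "nat \<Rightarrow> nat" where
  "search_body_code s = prod_encode (3, prod_encode (rf_num test_prog,
     list_encode [rf_num (Proj 0), rf_num (Proj 1),
       prod_encode (3, prod_encode (s, list_encode [rf_num snd_prog, rf_num fst_prog]))]))"

definition search_prog_code :: "nat \<Rightarrow> nat \<Rightarrow> nat" where
  "search_prog_code s c = prod_encode (5, prod_encode (3,
     prod_encode (search_body_code s, list_encode [rf_num (Proj 0), const_prog_code c])))"

definition witness_prog_code :: "nat \<Rightarrow> nat \<Rightarrow> nat \<Rightarrow> nat" where
  "witness_prog_code s c m = prod_encode (5, prod_encode (3,
     prod_encode (search_body_code s, list_encode [const_prog_code m, const_prog_code c])))"

lemma search_body_code_rf_num: "search_body_code (rf_num r) = rf_num (search_body r)"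
  by (simp add: search_body_code_def search_body_def)

lemma search_prog_code_rf_num: "search_prog_code (rf_num r) c = rf_num (search_prog r c)"
  by (simp add: search_prog_code_def search_prog_def search_body_code_rf_num const_prog_code_def)

lemma witness_prog_code_rf_num: "witness_prog_code (rf_num r) c m = rf_num (witness_prog r c m)"
  by (simp add: witness_prog_code_def witness_prog_def search_body_code_rf_num const_prog_code_def)

lemma comp_fn_search_body_code[comp_intros]:
  "comp_fn A n a \<Longrightarrow> comp_fn A n (\<lambda>xs. search_body_code (a xs))"
  unfolding search_body_code_def list_encode.simps by (intro comp_intros)

lemma comp_fn_search_prog_code[comp_intros]:
  "comp_fn A n a \<Longrightarrow> comp_fn A n b \<Longrightarrow> comp_fn A n (\<lambda>xs. search_prog_code (a xs) (b xs))"
  unfolding search_prog_code_def list_encode.simps by (intro comp_intros)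

lemma comp_fn_witness_prog_code[comp_intros]:
  "comp_fn A n a \<Longrightarrow> comp_fn A n b \<Longrightarrow> comp_fn A n d \<Longrightarrow>
    comp_fn A n (\<lambda>xs. witness_prog_code (a xs) (b xs) (d xs))"
  unfolding witness_prog_code_def list_encode.simps by (intro comp_intros)

lemma search_body_code_inv: "rf_num f = search_body_code s \<Longrightarrow> \<exists>r. rf_num r = s"
proof -
  let ?c = "prod_encode (3, prod_encode (s, list_encode [rf_num snd_prog, rf_num fst_prog]))"
  assume "rf_num f = search_body_code s"
  then obtain f' gs where "f = Comp f' gs" "map rf_num gs = [rf_num (Proj 0), rf_num (Proj 1), ?c]"
    unfolding search_body_code_def by (blast dest: rf_num_inv_comp)
  then obtain g where "rf_num g = ?c" by (auto simp: map_eq_Cons_conv)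
  then show ?thesis by (blast dest: rf_num_inv_comp)
qed

lemma search_code_inv:
  "rf_num p = prod_encode (5, prod_encode (3, prod_encode (search_body_code s, list_encode ys))) \<Longrightarrow>
    \<exists>r. rf_num r = s"
proof -
  assume "rf_num p = prod_encode (5, prod_encode (3, prod_encode (search_body_code s, list_encode ys)))"
  then obtain f where "rf_num f = prod_encode (3, prod_encode (search_body_code s, list_encode ys))"
    by (blast dest: rf_num_inv_mu)
  then obtain g where "rf_num g = search_body_code s" by (blast dest: rf_num_inv_comp)
  then show ?thesis by (rule search_body_code_inv)
qed

lemma rf_num_in_halting_set_iff: "rf_num p \<in> halting_set \<longleftrightarrow> (\<exists>y. eval {} p [rf_num p] y)"
  unfolding halting_set_def using rf_num_inj by blast

lemma search_prog_code_in_halting_set: "search_prog_code s c \<in> halting_set \<longleftrightarrow>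
    (\<exists>r n. rf_num r = s \<and> eval {} (search_prog r c) [search_prog_code s c] n)"
proof
  assume h: "search_prog_code s c \<in> halting_set"
  then obtain p where "rf_num p = search_prog_code s c" unfolding halting_set_def by blast
  then obtain r where r: "rf_num r = s" unfolding search_prog_code_def by (blast dest: search_code_inv)
  then have "search_prog_code s c = rf_num (search_prog r c)" using search_prog_code_rf_num by blast
  with h r show "\<exists>r n. rf_num r = s \<and> eval {} (search_prog r c) [search_prog_code s c] n"
    by (auto simp: rf_num_in_halting_set_iff)
next
  assume "\<exists>r n. rf_num r = s \<and> eval {} (search_prog r c) [search_prog_code s c] n"
  then show "search_prog_code s c \<in> halting_set"
    by (auto simp: search_prog_code_rf_num rf_num_in_halting_set_iff)
qed

lemma witness_prog_code_in_halting_set: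
  "witness_prog_code s c m \<in> halting_set \<longleftrightarrow> (\<exists>r. rf_num r = s \<and> eval {} (search_body r) [m, c] 0)"
proof
  assume h: "witness_prog_code s c m \<in> halting_set"
  then obtain p where "rf_num p = witness_prog_code s c m" unfolding halting_set_def by blast
  then obtain r where r: "rf_num r = s" unfolding witness_prog_code_def by (blast dest: search_code_inv)
  then have "witness_prog_code s c m = rf_num (witness_prog r c m)" using witness_prog_code_rf_num by blast
  with h r show "\<exists>r. rf_num r = s \<and> eval {} (search_body r) [m, c] 0"
    by (auto simp: rf_num_in_halting_set_iff witness_prog_halts_iff)
next
  assume "\<exists>r. rf_num r = s \<and> eval {} (search_body r) [m, c] 0"
  then show "witness_prog_code s c m \<in> halting_set"
    by (auto simp: witness_prog_code_rf_num rf_num_in_halting_set_iff witness_prog_halts_iff)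
qed


section \<open>The construction\<close>

text \<open>The construction is uniform in the oracle \<open>A\<close>: \<open>2e + 1 \<in> A\<close> answers a halting question
  about \<open>e\<close> and \<open>2i \<in> A\<close> encodes \<open>i \<in> Z\<close>. The disjuncts \<open>\<not> query_search A s r\<close> and
  \<open>\<not> covers A c\<close> only serve to make the \<open>LEAST\<close> searches well-defined where no search is needed.\<close>

definition query_search :: "nat set \<Rightarrow> nat \<Rightarrow> nat \<Rightarrow> bool" where
  "query_search A s r = (Suc (2 * search_prog_code s r) \<in> A)"

definition query_witness :: "nat set \<Rightarrow> nat \<Rightarrow> nat \<Rightarrow> nat \<Rightarrow> bool" where
  "query_witness A s r m = (Suc (2 * witness_prog_code s r m) \<in> A)"

definition least_witness :: "nat set \<Rightarrow> nat \<Rightarrow> nat \<Rightarrow> nat" where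
  "least_witness A s r = (LEAST m. \<not> query_search A s r \<or> query_witness A s r m)"

definition found_ext :: "nat set \<Rightarrow> nat \<Rightarrow> nat \<Rightarrow> nat" where
  "found_ext A s r = fst (prod_decode (least_witness A s r))"

definition covers :: "nat set \<Rightarrow> nat \<Rightarrow> bool" where
  "covers A c = (\<forall>i<code_length c. 2 * i \<in> A \<longrightarrow> code_nth c i = 1)"

definition pad_length :: "nat set \<Rightarrow> nat \<Rightarrow> nat \<Rightarrow> nat" where
  "pad_length A s c = (LEAST k. \<not> covers A c \<or> \<not> query_search A s (pad_ones c k)
     \<or> covers A (found_ext A s (pad_ones c k)))"

definition stage_step :: "nat set \<Rightarrow> nat \<Rightarrow> nat \<Rightarrow> nat" where
  "stage_step A s c = pad_ones
     (if query_search A s (pad_ones c (pad_length A s c)) then found_ext A s (pad_ones c (pad_length A s c))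
      else pad_ones c (pad_length A s c)) 1"

definition stage :: "nat set \<Rightarrow> nat \<Rightarrow> nat" where
  "stage A s = rec_nat 0 (\<lambda>s c. stage_step A s c) s"

definition generic_set :: "nat set \<Rightarrow> nat set" where
  "generic_set A = {n. code_nth (stage A (Suc n)) n = 1}"

lemma comp_pred_query_search[comp_intros]:
  "comp_fn A n a \<Longrightarrow> comp_fn A n b \<Longrightarrow> comp_pred A n (\<lambda>xs. query_search A (a xs) (b xs))"
  unfolding query_search_def by (intro comp_intros)

lemma comp_pred_query_witness[comp_intros]:
  "comp_fn A n a \<Longrightarrow> comp_fn A n b \<Longrightarrow> comp_fn A n d \<Longrightarrow>
    comp_pred A n (\<lambda>xs. query_witness A (a xs) (b xs) (d xs))"
  unfolding query_witness_def by (intro comp_intros)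

lemma comp_pred_covers[comp_intros]:
  "comp_fn A n a \<Longrightarrow> comp_pred A n (\<lambda>xs. covers A (a xs))"
  unfolding covers_def by (intro comp_intros comp_fn_tl) simp_all

lemma comp_fn_least_witness:
  assumes witness: "\<And>s r. \<exists>m. \<not> query_search A s r \<or> query_witness A s r m"
  shows "comp_fn A n a \<Longrightarrow> comp_fn A n b \<Longrightarrow> comp_fn A n (\<lambda>xs. least_witness A (a xs) (b xs))"
  unfolding least_witness_def by (intro comp_intros comp_fn_tl witness) simp_all

lemma comp_fn_found_ext:
  assumes witness: "\<And>s r. \<exists>m. \<not> query_search A s r \<or> query_witness A s r m"
  shows "comp_fn A n a \<Longrightarrow> comp_fn A n b \<Longrightarrow> comp_fn A n (\<lambda>xs. found_ext A (a xs) (b xs))"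
  unfolding found_ext_def by (intro comp_intros comp_fn_least_witness[OF witness])

lemma comp_fn_pad_length:
  assumes witness: "\<And>s r. \<exists>m. \<not> query_search A s r \<or> query_witness A s r m"
    and padding: "\<And>s c. \<exists>k. \<not> covers A c \<or> \<not> query_search A s (pad_ones c k)
      \<or> covers A (found_ext A s (pad_ones c k))"
  shows "comp_fn A n a \<Longrightarrow> comp_fn A n b \<Longrightarrow> comp_fn A n (\<lambda>xs. pad_length A (a xs) (b xs))"
  unfolding pad_length_def by (intro comp_intros comp_fn_tl comp_fn_found_ext[OF witness] padding) simp_all

lemma turing_le_generic_set:
  assumes witness: "\<And>s c. \<exists>m. \<not> query_search A s c \<or> query_witness A s c m"
    and padding: "\<And>s c. \<exists>k. \<not> covers A c \<or> \<not> query_search A s (pad_ones c k)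
      \<or> covers A (found_ext A s (pad_ones c k))"
  shows "turing_le (generic_set A) A"
proof -
  have "comp_fn A (Suc (Suc 1)) (\<lambda>ws. stage_step A (ws ! 0) (ws ! 1))"
    unfolding stage_step_def
    by (intro comp_intros comp_fn_pad_length[OF witness padding] comp_fn_found_ext[OF witness]) simp_all
  then have "comp_pred A 1 (\<lambda>xs. code_nth (rec_nat 0 (\<lambda>s c. stage_step A s c) (Suc (xs ! 0))) (xs ! 0) = 1)"
    by (intro comp_intros) simp_all
  then show ?thesis unfolding turing_le_iff_comp_pred generic_set_def stage_def by simp
qed

lemma Suc_double_in_join_iff: "Suc (2 * x) \<in> join Z H \<longleftrightarrow> x \<in> H"
  unfolding join_def by auto presburger+

lemma double_in_join_iff: "2 * x \<in> join Z H \<longleftrightarrow> x \<in> Z"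
  unfolding join_def by auto presburger+

lemma covers_iff:
  "covers (join Z H) c \<longleftrightarrow> (\<forall>i<code_length c. i \<in> Z \<longrightarrow> code_nth c i = 1)"
  by (simp add: covers_def double_in_join_iff)

lemma covers_pad_ones: "covers (join Z H) c \<Longrightarrow> covers (join Z H) (pad_ones c k)"
  by (auto simp: covers_iff code_length_pad_ones code_nth_pad_ones)

lemma query_search_iff: "query_search (join Z halting_set) s c \<longleftrightarrow>
    (\<exists>R n. rf_num R = s \<and> eval {} (search_prog R c) [x] n)"
  by (simp add: query_search_def Suc_double_in_join_iff search_prog_code_in_halting_set
      eval_search_prog_iff)

lemma query_witness_iff:
  "query_witness (join Z halting_set) (rf_num R) c m \<longleftrightarrow> eval {} (search_body R) [m, c] 0"
  using rf_num_inj
  by (auto simp: query_witness_def Suc_double_in_join_iff witness_prog_code_in_halting_set)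

lemma least_witness_exists:
  "\<exists>m. \<not> query_search (join Z halting_set) s c \<or> query_witness (join Z halting_set) s c m"
proof (cases "query_search (join Z halting_set) s c")
  case True
  then obtain R n where "rf_num R = s" "eval {} (search_prog R c) [0] n"
    unfolding query_search_iff[where x=0] by blast
  then show ?thesis by (auto simp: query_witness_iff eval_search_prog_iff)
qed blast

lemma least_witness_eq:
  assumes "eval {} (search_prog R c) [x] n"
  shows "least_witness (join Z halting_set) (rf_num R) c = n"
  unfolding least_witness_def
proof (rule Least_equality)
  from assms have n: "eval {} (search_body R) [n, c] 0"
    and below: "\<forall>m<n. \<exists>y. y \<noteq> 0 \<and> eval {} (search_body R) [m, c] y"
    by (simp_all add: eval_search_prog_iff)
  then show "\<not> query_search (join Z halting_set) (rf_num R) c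
      \<or> query_witness (join Z halting_set) (rf_num R) c n"
    by (simp add: query_witness_iff)
  fix m assume "\<not> query_search (join Z halting_set) (rf_num R) c
      \<or> query_witness (join Z halting_set) (rf_num R) c m"
  with assms have "eval {} (search_body R) [m, c] 0"
    unfolding query_search_iff[where x=x] query_witness_iff by blast
  with below eval_det show "n \<le> m" by (meson not_le)
qed

lemma found_ext_props:
  assumes "query_search (join Z halting_set) s c"
  shows "\<exists>R. rf_num R = s \<and> ext_candidate (least_witness (join Z halting_set) s c) c \<and>
     (\<exists>v. v \<noteq> 0 \<and> eval {} R [snd (prod_decode (least_witness (join Z halting_set) s c)),
                                  fst (prod_decode (least_witness (join Z halting_set) s c))] v)"
proof -
  from assms obtain R n where R: "rf_num R = s" and "eval {} (search_prog R c) [0] n"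
    unfolding query_search_iff[where x=0] by blast
  then have "least_witness (join Z halting_set) s c = n" "eval {} (search_body R) [n, c] 0"
    using least_witness_eq eval_search_prog_iff by blast+
  with R show ?thesis by (auto simp: eval_search_body_iff search_test_def split: if_splits)
qed

section \<open>Hyperimmunity bounds the padding\<close>

lemma hyperimmune_gap:
  assumes "hyperimmune Z" "computable g"
  shows "\<exists>n\<ge>L. {n..<g n} \<inter> Z = {}"
proof -
  define f where "f i = rec_nat L (\<lambda>_ x. max (Suc x) (g x)) i" for i
  have f_Suc: "f (Suc i) = max (Suc (f i)) (g (f i))" for i by (simp add: f_def)
  have g: "comp_fn {} 1 (\<lambda>xs. g (xs ! 0))"
    using assms(2) by (simp add: computable_def computable_in_iff_comp_fn)
  have "comp_fn {} (Suc (Suc 1)) (\<lambda>ws. max (Suc (ws ! 1)) (g (ws ! 1)))"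
    by (intro comp_fn_max comp_fn_Suc comp_fn_proj comp_fn_app1[OF g]) simp_all
  then have "comp_fn {} 1 (\<lambda>xs. f (xs ! 0))"
    unfolding f_def by (intro comp_fn_rec_nat comp_fn_const comp_fn_proj) simp_all
  moreover have "strict_mono f"
    by (rule strict_mono_Suc_iff[THEN iffD2]) (simp add: f_Suc less_max_iff_disj)
  ultimately obtain i where i: "{f i..<f (Suc i)} \<inter> Z = {}"
    using assms(1) unfolding hyperimmune_def computable_def computable_in_iff_comp_fn by blast
  have "L \<le> f i" by (induction i) (auto simp: f_def)
  moreover have "{f i..<g (f i)} \<subseteq> {f i..<f (Suc i)}" by (auto simp: f_Suc)
  ultimately show ?thesis using i by blast
qed

text \<open>If all queries are answered positively, the least witnesses are found by an unbounded search
  that never consults the oracle.\<close>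

lemma comp_fn_least_witness_oracle_free:
  assumes r: "comp_fn {} 1 (\<lambda>xs. r (xs ! 0))" and Q: "\<And>k. query_search (join Z halting_set) s (r k)"
  shows "comp_fn {} 1 (\<lambda>xs. least_witness (join Z halting_set) s (r (xs ! 0)))"
proof -
  from Q[of 0] obtain R where R: "rf_num R = s" unfolding query_search_iff[where x=0] by blast
  define p where "p = program_for 1 (\<lambda>xs. r (xs ! 0))"
  have p: "eval {} p [k] z \<longleftrightarrow> z = r k" for k z
    using eval_program_for_iff[OF r, of "[k]"] by (simp add: p_def)
  define F where "F = Comp (search_body R) [Proj 0, Comp p [Proj 1]]"
  have F: "eval {} F [m, k] y \<longleftrightarrow> eval {} (search_body R) [m, r k] y" for m k y
    by (simp add: F_def eval_Comp_iff list_all2_Cons1 eval_Proj_iff p)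
  have "eval {} (Mu F) [k] (least_witness (join Z halting_set) s (r k))" for k
  proof -
    from Q[of k] R rf_num_inj obtain n where n: "eval {} (search_prog R (r k)) [0] n"
      unfolding query_search_iff[where x=0] by blast
    then have "least_witness (join Z halting_set) s (r k) = n" using R least_witness_eq by blast
    with n show ?thesis by (simp add: eval_Mu_iff F eval_search_prog_iff)
  qed
  then show ?thesis unfolding comp_fn_def by (intro exI[of _ "Mu F"]) (auto simp: length_Suc_conv)
qed

lemma pad_length_exists:
  assumes "hyperimmune Z"
  shows "\<exists>k. \<not> covers (join Z halting_set) c \<or> \<not> query_search (join Z halting_set) s (pad_ones c k)
      \<or> covers (join Z halting_set) (found_ext (join Z halting_set) s (pad_ones c k))"
proof (rule ccontr)
  let ?A = "join Z halting_set" and ?L = "code_length c"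
  let ?t = "\<lambda>n. found_ext ?A s (pad_ones c (n - ?L))"
  assume "\<not> ?thesis"
  then have cov: "covers ?A c" and Q: "\<And>k. query_search ?A s (pad_ones c k)"
    and not_cov: "\<And>k. \<not> covers ?A (found_ext ?A s (pad_ones c k))" by auto
  have "comp_fn {} 1 (\<lambda>xs. least_witness ?A s (pad_ones c (xs ! 0 - ?L)))"
    by (rule comp_fn_least_witness_oracle_free[OF _ Q]) (intro comp_intros; simp)
  then have "comp_fn {} 1 (\<lambda>xs. code_length (?t (xs ! 0)))"
    unfolding found_ext_def by (intro comp_intros)
  then obtain n where n: "?L \<le> n" and gap: "{n..<code_length (?t n)} \<inter> Z = {}"
    using hyperimmune_gap[OF assms] by (fastforce simp: computable_def computable_in_iff_comp_fn)
  let ?r = "pad_ones c (n - ?L)"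
  from found_ext_props[OF Q] have "prefix_code ?r (?t n)"
    by (auto simp: ext_candidate_def found_ext_def)
  moreover have "code_length ?r = n" using n by (simp add: code_length_pad_ones)
  moreover have "covers ?A ?r" using cov by (rule covers_pad_ones)
  ultimately have "covers ?A (?t n)" using gap
    by (auto simp: covers_iff prefix_code_def) (metis atLeastLessThan_iff disjoint_iff not_le)
  with not_cov show False by blast
qed

section \<open>The generic set\<close>

context
  fixes Z :: "nat set"
  assumes hyp: "hyperimmune Z"
begin

abbreviation "oracle \<equiv> join Z halting_set"

lemma pad_length_spec:
  "\<not> covers oracle c \<or> \<not> query_search oracle s (pad_ones c (pad_length oracle s c))
    \<or> covers oracle (found_ext oracle s (pad_ones c (pad_length oracle s c)))"
  unfolding pad_length_def by (rule LeastI_ex) (rule pad_length_exists[OF hyp])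

lemma stage_step_extends:
  shows "prefix_code (pad_ones c (pad_length oracle s c)) (stage_step oracle s c)"
    and "code_length c < code_length (stage_step oracle s c)"
proof -
  let ?r = "pad_ones c (pad_length oracle s c)"
  let ?P = "if query_search oracle s ?r then found_ext oracle s ?r else ?r"
  have st: "stage_step oracle s c = pad_ones ?P 1" by (simp add: stage_step_def)
  have P: "prefix_code ?r ?P"
    using found_ext_props[where s=s and c="?r"]
    by (auto simp: ext_candidate_def found_ext_def prefix_code_refl)
  then show "prefix_code ?r (stage_step oracle s c)"
    unfolding st by (blast intro: prefix_code_trans prefix_code_pad_ones)
  from P show "code_length c < code_length (stage_step oracle s c)"
    unfolding st by (auto simp: prefix_code_def code_length_pad_ones)
qed

lemma prefix_code_stage_step: "prefix_code c (stage_step oracle s c)"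
  using stage_step_extends(1) prefix_code_pad_ones prefix_code_trans by blast

lemma stage_step_covers:
  assumes "covers oracle c" "bit_code c"
  shows "covers oracle (stage_step oracle s c) \<and> bit_code (stage_step oracle s c)"
proof -
  let ?r = "pad_ones c (pad_length oracle s c)"
  let ?P = "if query_search oracle s ?r then found_ext oracle s ?r else ?r"
  have "covers oracle ?P \<and> bit_code ?P"
  proof (cases "query_search oracle s ?r")
    case True
    then have "bit_code (found_ext oracle s ?r)"
      using found_ext_props by (auto simp: ext_candidate_def found_ext_def)
    moreover have "covers oracle (found_ext oracle s ?r)" using pad_length_spec[of c s] assms True by blast
    ultimately show ?thesis using True by simp
  qed (use assms in \<open>simp add: covers_pad_ones bit_code_pad_ones\<close>)
  then show ?thesis by (simp add: stage_step_def covers_pad_ones bit_code_pad_ones)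
qed

lemma stage_Suc: "stage oracle (Suc s) = stage_step oracle s (stage oracle s)"
  by (simp add: stage_def)

lemma stage_props:
  "covers oracle (stage oracle s) \<and> bit_code (stage oracle s) \<and> s \<le> code_length (stage oracle s)"
proof (induction s)
  case 0 then show ?case by (simp add: stage_def covers_def bit_code_def code_length_0)
next
  case (Suc s)
  with stage_step_covers stage_step_extends(2)[of "stage oracle s" s] show ?case
    by (simp add: stage_Suc Suc_le_eq)
qed

lemma stage_prefix: "s \<le> s' \<Longrightarrow> prefix_code (stage oracle s) (stage oracle s')"
proof (induction s' rule: dec_induct)
  case (step n)
  then show ?case using prefix_code_stage_step prefix_code_trans stage_Suc by metis
qed (rule prefix_code_refl)

lemma generic_set_bit:
  "i < code_length (stage oracle s) \<Longrightarrow> (i \<in> generic_set oracle \<longleftrightarrow> code_nth (stage oracle s) i = 1)"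
proof -
  assume i: "i < code_length (stage oracle s)"
  let ?M = "max s (Suc i)"
  have 1: "prefix_code (stage oracle s) (stage oracle ?M)" by (rule stage_prefix) simp
  have 2: "prefix_code (stage oracle (Suc i)) (stage oracle ?M)" by (rule stage_prefix) simp
  have "Suc i \<le> code_length (stage oracle (Suc i))" using stage_props by blast
  then have "code_nth (stage oracle (Suc i)) i = code_nth (stage oracle ?M) i"
    using 2 by (simp add: prefix_code_def)
  moreover have "code_nth (stage oracle s) i = code_nth (stage oracle ?M) i"
    using 1 i by (simp add: prefix_code_def)
  ultimately show ?thesis by (simp add: generic_set_def)
qed

lemma subset_generic_set: "Z \<subseteq> generic_set oracle"
proof
  fix i assume "i \<in> Z"
  have "Suc i \<le> code_length (stage oracle (Suc i))" "covers oracle (stage oracle (Suc i))"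
    using stage_props by blast+
  with \<open>i \<in> Z\<close> have "code_nth (stage oracle (Suc i)) i = 1" by (auto simp: covers_iff)
  then show "i \<in> generic_set oracle" by (simp add: generic_set_def)
qed

lemma str_code_init_seg:
  assumes "bit_code c" "prefix_code c (stage oracle s)"
  shows "str_code (init_seg (generic_set oracle) (code_length c)) = c"
proof (rule str_code_eq[OF assms(1)])
  fix j assume "j < length (init_seg (generic_set oracle) (code_length c))"
  then have j: "j < code_length c" by (simp add: init_seg_def)
  with assms(2) have "j < code_length (stage oracle s)" "code_nth c j = code_nth (stage oracle s) j"
    by (auto simp: prefix_code_def)
  with j show "init_seg (generic_set oracle) (code_length c) ! j \<longleftrightarrow> code_nth c j = 1"
    by (simp add: init_seg_def generic_set_bit)
qed (simp add: init_seg_def)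


lemma generic_set_meets:
  assumes R: "\<And>t x. eval {} R [t, x] (eval_clocked p t [x])"
  shows "(\<exists>n y. eval {} p [str_code (init_seg (generic_set oracle) n)] y) \<or>
    (\<exists>n. \<forall>\<rho> y. \<not> eval {} p [str_code (init_seg (generic_set oracle) n @ \<rho>)] y)"
proof -
  let ?G = "generic_set oracle" and ?s = "rf_num R"
  let ?c = "stage oracle ?s"
  let ?r = "pad_ones ?c (pad_length oracle ?s ?c)"
  have c: "covers oracle ?c" "bit_code ?c" using stage_props by blast+
  show ?thesis
  proof (cases "query_search oracle ?s ?r")
    case True
    let ?m = "least_witness oracle ?s ?r"
    let ?t = "found_ext oracle ?s ?r"
    from found_ext_props[OF True] obtain R' v where "rf_num R' = ?s" "ext_candidate ?m ?r" "v \<noteq> 0"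
      "eval {} R' [snd (prod_decode ?m), fst (prod_decode ?m)] v" by blast
    with R rf_num_inj eval_det have t: "bit_code ?t" and "eval_clocked p (snd (prod_decode ?m)) [?t] \<noteq> 0"
      unfolding ext_candidate_def found_ext_def by blast+
    then obtain y where "eval {} p [?t] y" using eval_clocked_sound not0_implies_Suc by blast
    moreover have "prefix_code ?t (stage oracle (Suc ?s))"
      using True by (simp add: stage_Suc stage_step_def prefix_code_pad_ones)
    with t have "str_code (init_seg ?G (code_length ?t)) = ?t" by (rule str_code_init_seg)
    ultimately show ?thesis by metis
  next
    case False
    have "\<not> eval {} p [str_code (init_seg ?G (code_length ?r) @ \<rho>)] y" for \<rho> y
    proof
      let ?x = "str_code (init_seg ?G (code_length ?r) @ \<rho>)"
      assume "eval {} p [?x] y"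
      then obtain t where t: "eval_clocked p t [?x] = Suc y" using eval_clocked_complete by blast
      have "prefix_code ?r (stage oracle (Suc ?s))" using stage_step_extends(1) stage_Suc by simp
      then have "str_code (init_seg ?G (code_length ?r)) = ?r"
        using c by (intro str_code_init_seg[where s="Suc ?s"] bit_code_pad_ones)
      then have "ext_candidate (prod_encode (?x, t)) ?r"
        by (metis ext_candidate_def prod_encode_inverse fst_conv bit_code_str_code
            prefix_code_str_code_append)
      then have "eval {} (search_body R) [prod_encode (?x, t), ?r] 0"
        using R[of t ?x] t by (auto simp: eval_search_body_iff search_test_def)
      moreover have "\<forall>m. \<exists>y. eval {} (search_body R) [m, ?r] y" using R by (auto simp: eval_search_body_iff)
      ultimately have "query_search oracle ?s ?r"
        unfolding query_search_iff[where x=0] by (blast dest: search_prog_halts)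
      with False show False ..
    qed
    then show ?thesis by blast
  qed
qed

lemma one_generic_generic_set: "one_generic (generic_set oracle)"
  unfolding one_generic_def
proof (intro allI impI)
  fix S assume "ce_strings S"
  then obtain p where S: "\<And>\<sigma>. \<sigma> \<in> S \<longleftrightarrow> (\<exists>y. eval {} p [str_code \<sigma>] y)" unfolding ce_strings_def by blast
  obtain R where R: "\<forall>ys. length ys = Suc 1 \<longrightarrow> eval {} R ys (eval_clocked p (hd ys) (tl ys))"
    using comp_fn_eval_clocked[of "{}" 1 p] unfolding comp_fn_def by blast
  have "eval {} R [t, x] (eval_clocked p t [x])" for t x using R[rule_format, of "[t, x]"] by simp
  from generic_set_meets[OF this]
  show "(\<exists>n. init_seg (generic_set oracle) n \<in> S) \<or>
      (\<exists>n. \<forall>\<tau>\<in>S. \<not> (\<exists>\<rho>. \<tau> = init_seg (generic_set oracle) n @ \<rho>))"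
  proof
    assume "\<exists>n y. eval {} p [str_code (init_seg (generic_set oracle) n)] y"
    then show ?thesis using S by blast
  next
    assume "\<exists>n. \<forall>\<rho> y. \<not> eval {} p [str_code (init_seg (generic_set oracle) n @ \<rho>)] y"
    then show ?thesis using S by blast
  qed
qed

end

theorem proposition4p7:
  fixes Z :: "nat set"
  assumes "hyperimmune Z"
  shows "\<exists>G. one_generic G \<and> turing_le G (join Z halting_set) \<and> Z \<subseteq> G"
proof (intro exI conjI)
  show "one_generic (generic_set (join Z halting_set))" by (rule one_generic_generic_set[OF assms])
  show "turing_le (generic_set (join Z halting_set)) (join Z halting_set)"
    by (rule turing_le_generic_set) (rule least_witness_exists, rule pad_length_exists[OF assms])
  show "Z \<subseteq> generic_set (join Z halting_set)" by (rule subset_generic_set[OF assms])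
qed

end
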